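(* Let $\mathcal{A}$ and $\mathcal{B}$ be $C^{*}$-algebras, let $\Xi$ be a Hilbert $\mathcal{A}$-module and $\nabla$ a Hilbert $\mathcal{B}$-module. Let $f:\Xi \rightarrow \nabla$ be a mapping for which there exists a function $\varphi:\Xi^{3}\rightarrow[0,\infty)$ such that $$\| f(\mu x+y)-\mu f(x)-f(y)\| \leq \varphi(x,y,0)$$ and $$\| f(\langle x,y\rangle z)-\langle f(x),f(y)\rangle f(z)\| \leq \varphi(x,y,z)$$ for all $x,y,z\in\Xi$ and all $\mu\in\mathbb{T}$. If there exists $0\leq L<1$ such that $\varphi(x,y,z)\leq 2L\,\varphi\left(\frac{x}{2},\frac{y}{2},\frac{z}{2}\right)$ for all $x,y,z\in\Xi$, then there exists a unique Hilbert $C^{*}$-module homomorphism $H:\Xi\rightarrow\nabla$ such that $$\|f(x)-H(x)\|\leq \frac{1}{2-2L}\varphi(x,x,0)$$ for all $x\in\Xi$.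
   Context: $\mathbb{T}=\{z\in\mathbb{C}:|z|=1\}$. For a $C^{*}$-algebra $\mathcal{A}$, a (left) Hilbert $\mathcal{A}$-module is a complex linear space $\Xi$ with a compatible left $\mathcal{A}$-module action ($\lambda(ax)=(\lambda a)x=a(\lambda x)$) and a map $\langle\cdot,\cdot\rangle:\Xi\times\Xi\to\mathcal{A}$ that is linear in the first variable, satisfies $\langle ax,y\rangle=a\langle x,y\rangle$, $\langle x,y\rangle^{*}=\langle y,x\rangle$, $\langle x,x\rangle\geq 0$ with equality iff $x=0$, and such that $\Xi$ is complete in the norm $\|x\|=\|\langle x,x\rangle\|^{1/2}$. For a Hilbert $\mathcal{A}$-module $\Xi$ and a Hilbert $\mathcal{B}$-module $\nabla$, a Hilbert $C^{*}$-module homomorphism is a $\mathbb{C}$-linear map $H:\Xi\to\nabla$ with $H(\langle x,y\rangle z)=\langle H(x),H(y)\rangle H(z)$ for all $x,y,z\in\Xi$. *)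

theory Defs
  imports Complex_Main
begin

class complex_vec = ab_group_add +
  fixes scaleC :: "complex \<Rightarrow> 'a \<Rightarrow> 'a" (infixr \<open>*\<^sub>C\<close> 75)
  assumes scaleC_add_right: "c *\<^sub>C (x + y) = c *\<^sub>C x + c *\<^sub>C y"
    and scaleC_add_left: "(c + d) *\<^sub>C x = c *\<^sub>C x + d *\<^sub>C x"
    and scaleC_scaleC: "c *\<^sub>C (d *\<^sub>C x) = (c * d) *\<^sub>C x"
    and scaleC_one: "1 *\<^sub>C x = x"

class cstar_algebra = real_normed_algebra + banach + complex_vec +
  fixes cstar :: "'a \<Rightarrow> 'a"
  assumes scaleR_scaleC: "r *\<^sub>R x = complex_of_real r *\<^sub>C x"
    and norm_scaleC: "norm (c *\<^sub>C x) = cmod c * norm x"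
    and mult_scaleC_left: "(c *\<^sub>C x) * y = c *\<^sub>C (x * y)"
    and mult_scaleC_right: "x * (c *\<^sub>C y) = c *\<^sub>C (x * y)"
    and cstar_cstar: "cstar (cstar x) = x"
    and cstar_add: "cstar (x + y) = cstar x + cstar y"
    and cstar_scaleC: "cstar (c *\<^sub>C x) = cnj c *\<^sub>C cstar x"
    and cstar_mult: "cstar (x * y) = cstar y * cstar x"
    and cstar_identity: "norm (cstar x * x) = norm x ^ 2"

definition cstar_pos :: "'a::cstar_algebra \<Rightarrow> bool" where
  "cstar_pos a \<longleftrightarrow> (\<exists>b. a = cstar b * b)"

definition hnorm :: "('x \<Rightarrow> 'x \<Rightarrow> 'a::cstar_algebra) \<Rightarrow> 'x \<Rightarrow> real" where
  "hnorm ip x = sqrt (norm (ip x x))"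

definition hilbert_module ::
  "('a::cstar_algebra \<Rightarrow> 'x::complex_vec \<Rightarrow> 'x) \<Rightarrow> ('x \<Rightarrow> 'x \<Rightarrow> 'a) \<Rightarrow> bool" where
  "hilbert_module act ip \<longleftrightarrow>
     \<comment> \<open>left A-module action compatible with the complex linear structure\<close>
     (\<forall>a x y. act a (x + y) = act a x + act a y) \<and>
     (\<forall>a b x. act (a + b) x = act a x + act b x) \<and>
     (\<forall>a b x. act (a * b) x = act a (act b x)) \<and>
     (\<forall>c a x. c *\<^sub>C (act a x) = act (c *\<^sub>C a) x \<and> act (c *\<^sub>C a) x = act a (c *\<^sub>C x)) \<and>
     \<comment> \<open>A-valued inner product\<close>
     (\<forall>x y z. ip (x + y) z = ip x z + ip y z) \<and>
     (\<forall>c x y. ip (c *\<^sub>C x) y = c *\<^sub>C ip x y) \<and>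
     (\<forall>a x y. ip (act a x) y = a * ip x y) \<and>
     (\<forall>x y. cstar (ip x y) = ip y x) \<and>
     (\<forall>x. cstar_pos (ip x x)) \<and>
     (\<forall>x. ip x x = 0 \<longleftrightarrow> x = 0) \<and>
     \<comment> \<open>completeness w.r.t. the norm sqrt(norm <x,x>)\<close>
     (\<forall>X::nat \<Rightarrow> 'x. (\<forall>e>0. \<exists>N. \<forall>m\<ge>N. \<forall>n\<ge>N. hnorm ip (X m - X n) < e) \<longrightarrow>
        (\<exists>l. \<forall>e>0. \<exists>N. \<forall>n\<ge>N. hnorm ip (X n - l) < e))"

definition hilbert_module_hom ::
  "('a::cstar_algebra \<Rightarrow> 'x::complex_vec \<Rightarrow> 'x) \<Rightarrow> ('x \<Rightarrow> 'x \<Rightarrow> 'a) \<Rightarrow>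
   ('b::cstar_algebra \<Rightarrow> 'y::complex_vec \<Rightarrow> 'y) \<Rightarrow> ('y \<Rightarrow> 'y \<Rightarrow> 'b) \<Rightarrow> ('x \<Rightarrow> 'y) \<Rightarrow> bool" where
  "hilbert_module_hom actA ipX actB ipY H \<longleftrightarrow>
     (\<forall>x y. H (x + y) = H x + H y) \<and>
     (\<forall>c x. H (c *\<^sub>C x) = c *\<^sub>C H x) \<and>
     (\<forall>x y z. H (actA (ipX x y) z) = actB (ipY (H x) (H y)) (H z))"

end

(* Hyers' direct method. Put H x = lim 2^-n f (2^n x). The hypothesis on phi makes consecutive
   terms differ by at most L^n phi(x,x,0)/2, so the sequence is Cauchy and its limit stays within
   phi(x,x,0)/(2-2L) of f. Rescaling both approximate identities by 2^n and passing to the limit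
   shows that H is additive, T-homogeneous (hence C-linear, as every complex number is a positive
   integer times a sum of two unimodular ones) and, since <2^n x, 2^n y> 2^n z = 8^n <x,y> z,
   a module homomorphism. Two linear maps within that distance of f differ at x by 2^-n times
   their distance at 2^n x, which is O(2^n L^n), so they coincide.

   The only analytic fact about Hilbert modules needed is that sqrt ||<x,x>|| is a norm, i.e. the
   Cauchy-Schwarz inequality ||<x,y>||^2 <= ||<x,x>|| ||<y,y>||. Its proof rests on the
   monotonicity ||b^* b|| <= ||b^* b + c^* c||, which follows from the Fukamiya-Kaplansky theorem
   that b^* b is positive. That theorem is proved in the unitization, where square roots of
   positive elements are given by the binomial series of sqrt(1 - z). *)

theory Submission
  imports Defs "HOL-Computational_Algebra.Formal_Power_Series"
begin

section \<open>Complex scalars and the involution\<close>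

context complex_vec
begin

lemma scaleC_zero_left [simp]: "0 *\<^sub>C x = 0"
proof -
  have "0 *\<^sub>C x = 0 *\<^sub>C x + 0 *\<^sub>C x" using scaleC_add_left[of 0 0 x] by simp
  thus ?thesis by simp
qed

lemma scaleC_zero_right [simp]: "c *\<^sub>C 0 = 0"
proof -
  have "c *\<^sub>C 0 = c *\<^sub>C 0 + c *\<^sub>C 0" using scaleC_add_right[of c 0 0] by simp
  thus ?thesis by simp
qed

lemma scaleC_minus_right: "c *\<^sub>C (- x) = - (c *\<^sub>C x)"
proof -
  have "c *\<^sub>C (- x) + c *\<^sub>C x = 0"
    by (simp only: scaleC_add_right[symmetric] add.left_inverse scaleC_zero_right)
  thus ?thesis by (simp only: eq_neg_iff_add_eq_0)
qed

lemma scaleC_minus_left: "(- c) *\<^sub>C x = - (c *\<^sub>C x)"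
proof -
  have "(- c) *\<^sub>C x + c *\<^sub>C x = 0"
    by (simp only: scaleC_add_left[symmetric]) simp
  thus ?thesis by (simp only: eq_neg_iff_add_eq_0)
qed

lemma scaleC_diff_right: "c *\<^sub>C (x - y) = c *\<^sub>C x - c *\<^sub>C y"
  by (simp only: diff_conv_add_uminus scaleC_add_right scaleC_minus_right)

lemma scaleC_two: "(2::complex) *\<^sub>C x = x + x"
  using scaleC_add_left[of 1 1 x] by (simp add: scaleC_one)

end

context cstar_algebra
begin

lemma cstar_zero [simp]: "cstar 0 = 0"
proof -
  have "cstar 0 = cstar 0 + cstar 0" using cstar_add[of 0 0] by simp
  thus ?thesis by simp
qed

lemma cstar_minus: "cstar (- x) = - cstar x"
proof -
  have "cstar (- x) + cstar x = 0" by (simp only: cstar_add[symmetric]) simp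
  thus ?thesis by (simp only: eq_neg_iff_add_eq_0)
qed

lemma cstar_diff: "cstar (x - y) = cstar x - cstar y"
  by (simp only: diff_conv_add_uminus cstar_add cstar_minus)

lemma cstar_scaleR: "cstar (r *\<^sub>R x) = r *\<^sub>R cstar x"
  by (simp add: scaleR_scaleC cstar_scaleC)

lemma norm_cstar [simp]: "norm (cstar x) = norm x"
proof -
  have le: "norm y \<le> norm (cstar y)" for y
  proof (cases "y = 0")
    case False
    have "norm y * norm y = norm (cstar y * y)" by (simp add: cstar_identity power2_eq_square)
    also have "\<dots> \<le> norm (cstar y) * norm y" by (rule norm_mult_ineq)
    finally show ?thesis using False by simp
  qed simp
  show ?thesis using le[of x] le[of "cstar x"] by (simp add: cstar_cstar)
qed

lemma norm_mult_cstar: "norm (x * cstar x) = norm x ^ 2"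
  using cstar_identity[of "cstar x"] by (simp only: cstar_cstar norm_cstar)

end

lemma bounded_linear_cstar: "bounded_linear (cstar :: 'a::cstar_algebra \<Rightarrow> 'a)"
proof
  show "cstar (x + y) = cstar x + cstar y" for x y :: 'a by (rule cstar_add)
  show "cstar (r *\<^sub>R x) = r *\<^sub>R cstar x" for r and x :: 'a by (rule cstar_scaleR)
  show "\<exists>K. \<forall>x::'a. norm (cstar x) \<le> norm x * K" by (rule exI[of _ 1]) simp
qed

class cstar_algebra_1 = cstar_algebra + real_normed_algebra_1

lemma cstar_one: "cstar (1::'a::cstar_algebra_1) = 1"
  using cstar_mult[of 1 "cstar (1::'a)"] by (simp add: cstar_cstar)

lemma cstar_of_real: "cstar (of_real t :: 'a::cstar_algebra_1) = of_real t"
  by (simp add: of_real_def cstar_scaleR cstar_one)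

lemma cstar_power: "cstar ((x::'a::cstar_algebra_1) ^ n) = cstar x ^ n"
proof (induction n)
  case (Suc n)
  have "cstar (x ^ Suc n) = cstar (x ^ n * x)" by (simp add: power_commutes)
  also have "\<dots> = cstar x * cstar x ^ n" by (simp add: cstar_mult Suc)
  finally show ?case by simp
qed (simp add: cstar_one)

definition selfadjoint :: "'a::cstar_algebra \<Rightarrow> bool" where
  "selfadjoint h \<longleftrightarrow> cstar h = h"

lemma selfadjoint_add: "selfadjoint k \<Longrightarrow> selfadjoint l \<Longrightarrow> selfadjoint (k + l)"
  by (simp add: selfadjoint_def cstar_add)

lemma selfadjoint_diff: "selfadjoint k \<Longrightarrow> selfadjoint l \<Longrightarrow> selfadjoint (k - l)"
  by (simp add: selfadjoint_def cstar_diff)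

lemma selfadjoint_scaleR: "selfadjoint k \<Longrightarrow> selfadjoint (c *\<^sub>R k)"
  by (simp add: selfadjoint_def cstar_scaleR)

lemma selfadjoint_mult_self: "selfadjoint k \<Longrightarrow> selfadjoint (k * k)"
  by (simp add: selfadjoint_def cstar_mult)

lemma selfadjoint_of_real: "selfadjoint (of_real t :: 'a::cstar_algebra_1)"
  by (simp add: selfadjoint_def cstar_of_real)

lemma selfadjoint_one: "selfadjoint (1 :: 'a::cstar_algebra_1)"
  using selfadjoint_of_real[of 1] by simp

lemma selfadjoint_power: "selfadjoint h \<Longrightarrow> selfadjoint ((h::'a::cstar_algebra_1) ^ n)"
  by (simp add: selfadjoint_def cstar_power)

lemma norm_square_selfadjoint: "selfadjoint h \<Longrightarrow> norm (h * h) = norm h ^ 2"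
  using cstar_identity[of h] by (simp add: selfadjoint_def)

lemma norm_power_selfadjoint:
  assumes "selfadjoint h"
  shows "norm ((h::'a::cstar_algebra_1) ^ n) = norm h ^ n"
proof (cases "h = 0")
  case True thus ?thesis by (cases n) auto
next
  case False
  have pow2: "norm (h ^ (2 ^ k)) = norm h ^ (2 ^ k)" for k
  proof (induction k)
    case (Suc k)
    have "h ^ (2 ^ Suc k) = h ^ (2 ^ k) * h ^ (2 ^ k)"
      by (simp add: power_add[symmetric] mult_2)
    hence "norm (h ^ (2 ^ Suc k)) = norm (h ^ (2 ^ k)) ^ 2"
      using norm_square_selfadjoint[OF selfadjoint_power[OF assms]] by simp
    thus ?case using Suc by (simp add: power_mult[symmetric] mult.commute)
  qed simp
  \<comment> \<open>The upper bound is submultiplicativity; the lower one comes from the exact value at \<open>2 ^ n\<close>.\<close>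
  define N where "N = (2::nat) ^ n"
  have nN: "n \<le> N" using less_exp[of n] by (simp add: N_def)
  have "norm h ^ n * norm h ^ (N - n) = norm (h ^ n * h ^ (N - n))"
    using pow2[of n] nN by (simp add: N_def power_add[symmetric])
  also have "\<dots> \<le> norm (h ^ n) * norm h ^ (N - n)"
    by (intro order_trans[OF norm_mult_ineq] mult_left_mono norm_power_ineq) simp_all
  finally have "norm h ^ n \<le> norm (h ^ n)" using False by (simp add: mult_le_cancel_right)
  thus ?thesis using norm_power_ineq[of h n] by simp
qed


section \<open>The binomial series of \<open>\<surd>(1 - z)\<close>\<close>

definition sqrt_coeff :: "nat \<Rightarrow> real" where
  "sqrt_coeff n = ((1/2::real) gchoose n) * (-1) ^ n"

lemma sqrt_coeff_0 [simp]: "sqrt_coeff 0 = 1"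
  by (simp add: sqrt_coeff_def)

lemma sqrt_coeff_Suc: "sqrt_coeff (Suc n) = sqrt_coeff n * (real n - 1/2) / (real n + 1)"
proof -
  have "(1/2::real) * ((1/2) gchoose n)
      = real n * ((1/2) gchoose n) + real (Suc n) * ((1/2) gchoose Suc n)"
    by (rule gbinomial_mult_1)
  hence e: "((1/2::real) gchoose Suc n) = (1/2 - real n) * ((1/2) gchoose n) / (real n + 1)"
    by (simp add: field_simps)
  show ?thesis unfolding sqrt_coeff_def e by (simp add: field_simps)
qed

lemma sqrt_coeff_nonpos: "n \<ge> 1 \<Longrightarrow> sqrt_coeff n \<le> 0"
proof (induction n)
  case (Suc n)
  show ?case
  proof (cases "n = 0")
    case False
    hence "sqrt_coeff n \<le> 0" "real n - 1/2 \<ge> 0" using Suc by auto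
    thus ?thesis by (simp add: sqrt_coeff_Suc mult_nonpos_nonneg divide_nonpos_pos)
  qed (simp add: sqrt_coeff_Suc)
qed simp

lemma sum_sqrt_coeff: "(\<Sum>k\<le>m. sqrt_coeff k) = - 2 * (real m + 1) * sqrt_coeff (Suc m)"
proof (induction m)
  case (Suc m)
  have "(\<Sum>k\<le>Suc m. sqrt_coeff k) = - 2 * (real m + 1) * sqrt_coeff (Suc m) + sqrt_coeff (Suc m)"
    using Suc by simp
  also have "\<dots> = - 2 * (real (Suc m) + 1) * sqrt_coeff (Suc (Suc m))"
    by (simp add: sqrt_coeff_Suc[of "Suc m"] field_simps)
  finally show ?case .
qed (simp add: sqrt_coeff_Suc)

lemma sum_abs_sqrt_coeff_Suc_le: "(\<Sum>k<n. \<bar>sqrt_coeff (Suc k)\<bar>) \<le> 1"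
proof -
  have "(\<Sum>k<n. \<bar>sqrt_coeff (Suc k)\<bar>) = - (\<Sum>k<n. sqrt_coeff (Suc k))"
    using sqrt_coeff_nonpos by (simp add: sum_negf[symmetric] abs_of_nonpos)
  also have "(\<Sum>k<n. sqrt_coeff (Suc k)) = (\<Sum>k\<le>n. sqrt_coeff k) - 1"
    by (simp add: lessThan_Suc_atMost[symmetric] sum.lessThan_Suc_shift del: sum.lessThan_Suc)
  finally show ?thesis
    using sqrt_coeff_nonpos[of "Suc n"] by (simp add: sum_sqrt_coeff mult_nonpos_nonpos)
qed

lemma summable_abs_sqrt_coeff_Suc: "summable (\<lambda>k. \<bar>sqrt_coeff (Suc k)\<bar>)"
  by (rule summableI_nonneg_bounded[OF _ sum_abs_sqrt_coeff_Suc_le]) simp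

lemma summable_abs_sqrt_coeff: "summable (\<lambda>k. \<bar>sqrt_coeff k\<bar>)"
  using summable_abs_sqrt_coeff_Suc by (subst summable_Suc_iff[symmetric])

lemma suminf_abs_sqrt_coeff_Suc_le: "(\<Sum>k. \<bar>sqrt_coeff (Suc k)\<bar>) \<le> 1"
  by (rule suminf_le_const[OF summable_abs_sqrt_coeff_Suc sum_abs_sqrt_coeff_Suc_le])

text \<open>The coefficients square to those of \<open>1 - z\<close> (Vandermonde's identity).\<close>

lemma sqrt_coeff_convolution:
  "(\<Sum>i\<le>k. sqrt_coeff i * sqrt_coeff (k - i)) = (if k = 0 then 1 else if k = 1 then -1 else 0)"
proof -
  have "(\<Sum>i\<le>k. sqrt_coeff i * sqrt_coeff (k - i))
      = (\<Sum>i\<le>k. ((1/2::real) gchoose i) * ((1/2) gchoose (k - i)) * (-1)^k)"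
    by (intro sum.cong refl) (simp add: sqrt_coeff_def power_add[symmetric])
  also have "\<dots> = (\<Sum>i\<in>{0..k}. ((1/2::real) gchoose i) * ((1/2) gchoose (k - i))) * (-1)^k"
    by (simp add: sum_distrib_right atLeast0AtMost)
  also have "\<dots> = ((1::real) gchoose k) * (-1)^k"
    using gbinomial_Vandermonde[of "1/2::real" "1/2" k] by simp
  also have "\<dots> = (if k = 0 then 1 else if k = 1 then -1 else 0)"
  proof -
    have "((1::real) gchoose k) = 0" if "k \<ge> 2"
    proof -
      have "(\<Prod>i = 0..<k. (1::real) - real i) = 0"
        using that by (subst prod_zero_iff) (auto intro!: bexI[of _ 1])
      hence "fact k * ((1::real) gchoose k) = 0" by (simp add: gbinomial_mult_fact)
      thus ?thesis by simp
    qed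
    thus ?thesis by (cases k; cases "k - 1") auto
  qed
  finally show ?thesis .
qed

definition sqrt_one_minus :: "'a::cstar_algebra_1 \<Rightarrow> 'a" where
  "sqrt_one_minus x = (\<Sum>n. sqrt_coeff n *\<^sub>R x ^ n)"

lemma norm_sqrt_series_term_le:
  assumes "norm (x::'a::real_normed_algebra_1) \<le> 1"
  shows "norm (sqrt_coeff n *\<^sub>R x ^ n) \<le> \<bar>sqrt_coeff n\<bar>"
proof -
  have "norm (x ^ n) \<le> 1"
    using norm_power_ineq[of x n] power_le_one[OF norm_ge_zero assms, of n] by linarith
  thus ?thesis by (simp add: mult_left_le[OF _ abs_ge_zero])
qed

lemma summable_norm_sqrt_series:
  "norm (x::'a::cstar_algebra_1) \<le> 1 \<Longrightarrow> summable (\<lambda>n. norm (sqrt_coeff n *\<^sub>R x ^ n))"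
  by (rule summable_comparison_test'[OF summable_abs_sqrt_coeff, of 0])
    (use norm_sqrt_series_term_le in auto)

lemma summable_sqrt_series:
  "norm (x::'a::cstar_algebra_1) \<le> 1 \<Longrightarrow> summable (\<lambda>n. sqrt_coeff n *\<^sub>R x ^ n)"
  by (rule summable_norm_cancel[OF summable_norm_sqrt_series])

lemma sqrt_one_minus_square:
  assumes "norm (x::'a::cstar_algebra_1) \<le> 1"
  shows "sqrt_one_minus x * sqrt_one_minus x = 1 - x"
proof -
  have "sqrt_one_minus x * sqrt_one_minus x
      = (\<Sum>k. \<Sum>i\<le>k. (sqrt_coeff i *\<^sub>R x ^ i) * (sqrt_coeff (k - i) *\<^sub>R x ^ (k - i)))"
    unfolding sqrt_one_minus_def
    by (rule Cauchy_product[OF summable_norm_sqrt_series[OF assms] summable_norm_sqrt_series[OF assms]])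
  also have "\<dots> = (\<Sum>k. (\<Sum>i\<le>k. sqrt_coeff i * sqrt_coeff (k - i)) *\<^sub>R x ^ k)"
    by (intro suminf_cong)
      (simp add: scaleR_sum_left power_add[symmetric] mult.commute)
  also have "\<dots> = (\<Sum>k. (if k = 0 then 1 else if k = 1 then -1 else 0) *\<^sub>R x ^ k)"
    by (simp only: sqrt_coeff_convolution)
  also have "\<dots> = (\<Sum>k\<in>{0,1}. (if k = 0 then 1 else if k = 1 then -1 else 0) *\<^sub>R x ^ k)"
    by (rule sums_unique[symmetric], rule sums_finite) auto
  also have "\<dots> = 1 - x" by simp
  finally show ?thesis .
qed

lemma norm_one_minus_sqrt_one_minus_le:
  assumes "norm (x::'a::cstar_algebra_1) \<le> 1"
  shows "norm (1 - sqrt_one_minus x) \<le> 1"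
proof -
  have sn: "summable (\<lambda>n. norm (sqrt_coeff (Suc n) *\<^sub>R x ^ Suc n))"
    using summable_norm_sqrt_series[OF assms] by (subst summable_Suc_iff)
  have "1 - sqrt_one_minus x = - (\<Sum>n. sqrt_coeff (Suc n) *\<^sub>R x ^ Suc n)"
    unfolding sqrt_one_minus_def using suminf_split_head[OF summable_sqrt_series[OF assms]] by simp
  hence "norm (1 - sqrt_one_minus x) = norm (\<Sum>n. sqrt_coeff (Suc n) *\<^sub>R x ^ Suc n)" by simp
  also have "\<dots> \<le> (\<Sum>n. norm (sqrt_coeff (Suc n) *\<^sub>R x ^ Suc n))" by (rule summable_norm[OF sn])
  also have "\<dots> \<le> (\<Sum>n. \<bar>sqrt_coeff (Suc n)\<bar>)"
    by (rule suminf_le[OF _ sn summable_abs_sqrt_coeff_Suc]) (rule norm_sqrt_series_term_le[OF assms])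
  also have "\<dots> \<le> 1" by (rule suminf_abs_sqrt_coeff_Suc_le)
  finally show ?thesis .
qed

lemma selfadjoint_sqrt_one_minus:
  assumes "selfadjoint x" "norm (x::'a::cstar_algebra_1) \<le> 1"
  shows "selfadjoint (sqrt_one_minus x)"
proof -
  have "cstar (sqrt_one_minus x) = (\<Sum>n. cstar (sqrt_coeff n *\<^sub>R x ^ n))"
    unfolding sqrt_one_minus_def
    by (rule bounded_linear.suminf[OF bounded_linear_cstar summable_sqrt_series[OF assms(2)]])
  also have "\<dots> = sqrt_one_minus x"
    using assms(1) by (simp add: sqrt_one_minus_def selfadjoint_def cstar_scaleR cstar_power)
  finally show ?thesis by (simp add: selfadjoint_def)
qed

lemma sqrt_one_minus_commute:
  assumes "norm (x::'a::cstar_algebra_1) \<le> 1" "x * w = w * x"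
  shows "sqrt_one_minus x * w = w * sqrt_one_minus x"
proof -
  have s: "summable (\<lambda>n. sqrt_coeff n *\<^sub>R x ^ n)" by (rule summable_sqrt_series[OF assms(1)])
  have "sqrt_one_minus x * w = (\<Sum>n. sqrt_coeff n *\<^sub>R x ^ n * w)"
    unfolding sqrt_one_minus_def by (rule suminf_mult2[OF s])
  also have "\<dots> = (\<Sum>n. w * (sqrt_coeff n *\<^sub>R x ^ n))"
    using power_commuting_commutes[OF assms(2)] by simp
  also have "\<dots> = w * sqrt_one_minus x"
    unfolding sqrt_one_minus_def by (rule suminf_mult[OF s])
  finally show ?thesis .
qed


section \<open>Positive elements of a unital C*-algebra\<close>

text \<open>Positivity without spectra: a self-adjoint \<open>h\<close> has spectrum in \<open>[0, \<infinity>)\<close> iff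
  \<open>\<parallel>t - h\<parallel> \<le> t\<close> for some \<open>t \<ge> 0\<close>.\<close>

definition positive :: "'a::cstar_algebra_1 \<Rightarrow> bool" where
  "positive h \<longleftrightarrow> selfadjoint h \<and> (\<exists>t\<ge>0. norm (of_real t - h) \<le> t)"

definition invertible :: "'a::ring_1 \<Rightarrow> bool" where
  "invertible x \<longleftrightarrow> (\<exists>z. x * z = 1 \<and> z * x = 1)"

lemma of_real_mult_commute: "of_real r * x = x * (of_real r :: 'a::real_algebra_1)"
  by (simp add: of_real_def)

lemma norm_square_le_norm_add_square:
  fixes u v :: "'a::cstar_algebra"
  assumes "selfadjoint u" "selfadjoint v" "u * v = v * u"
  shows "norm (u * u) \<le> norm (u * u + v * v)"
proof -
  define w where "w = u + \<i> *\<^sub>C v"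
  have cw: "cstar w = u - \<i> *\<^sub>C v"
    using assms by (simp add: w_def cstar_add cstar_scaleC selfadjoint_def scaleC_minus_left)
  have "cstar w * w = u * u + u * (\<i> *\<^sub>C v) - (\<i> *\<^sub>C v) * u - (\<i> *\<^sub>C v) * (\<i> *\<^sub>C v)"
    unfolding cw by (simp add: w_def distrib_left left_diff_distrib)
  also have "\<dots> = u * u + v * v"
    using assms(3)
    by (simp add: mult_scaleC_left mult_scaleC_right scaleC_scaleC scaleC_minus_left scaleC_one)
  finally have w2: "norm w ^ 2 = norm (u * u + v * v)" using cstar_identity[of w] by simp
  have "w + cstar w = 2 *\<^sub>R u" unfolding cw by (simp add: w_def scaleR_2)
  hence "2 * norm u = norm (w + cstar w)" by simp
  also have "\<dots> \<le> 2 * norm w" using norm_triangle_ineq[of w "cstar w"] by simp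
  finally have "norm u ^ 2 \<le> norm w ^ 2" by (simp add: power_mono)
  thus ?thesis using w2 norm_square_selfadjoint[OF assms(1)] by simp
qed

lemma norm_of_real_minus_square_le:
  fixes k :: "'a::cstar_algebra_1"
  assumes "selfadjoint k"
  shows "norm (of_real (norm k ^ 2) - k * k) \<le> norm k ^ 2"
proof (cases "k = 0")
  case False
  \<comment> \<open>For \<open>j = k / \<parallel>k\<parallel>\<close> the square root \<open>s\<close> of \<open>1 - j\<^sup>2\<close> commutes with \<open>j\<close>, and \<open>s\<^sup>2 + j\<^sup>2 = 1\<close>.\<close>
  define m where "m = norm k"
  have m: "m > 0" using False by (simp add: m_def)
  define j where "j = (1 / m) *\<^sub>R k"
  have j: "selfadjoint j" "norm j = 1"
    using assms m by (simp_all add: j_def m_def selfadjoint_scaleR)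
  have x: "selfadjoint (j * j)" "norm (j * j) \<le> 1"
    using j by (simp_all add: selfadjoint_mult_self norm_square_selfadjoint)
  define s where "s = sqrt_one_minus (j * j)"
  have ss: "s * s = 1 - j * j" unfolding s_def by (rule sqrt_one_minus_square[OF x(2)])
  have sj: "s * j = j * s"
    using sqrt_one_minus_commute[of "j * j" j] x(2) by (simp add: s_def mult.assoc)
  have "norm (s * s) \<le> norm (s * s + j * j)"
    by (rule norm_square_le_norm_add_square[OF selfadjoint_sqrt_one_minus[OF x, folded s_def] j(1) sj])
  hence n1: "norm (1 - j * j) \<le> 1" by (simp add: ss)
  have "of_real (m ^ 2) - k * k = (m ^ 2) *\<^sub>R (1 - j * j)"
    using m by (simp add: j_def of_real_def scaleR_diff_right power2_eq_square)
  hence "norm (of_real (m ^ 2) - k * k) = m ^ 2 * norm (1 - j * j)" by simp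
  also have "\<dots> \<le> m ^ 2" using n1 by (simp add: mult_left_le)
  finally show ?thesis by (simp add: m_def)
qed simp

lemma positive_imp_selfadjoint: "positive h \<Longrightarrow> selfadjoint h"
  by (simp add: positive_def)

lemma positive_square: "selfadjoint k \<Longrightarrow> positive ((k::'a::cstar_algebra_1) * k)"
  unfolding positive_def using norm_of_real_minus_square_le[of k]
  by (intro conjI selfadjoint_mult_self exI[of _ "norm k ^ 2"]) simp_all

lemma positive_zero: "positive (0::'a::cstar_algebra_1)"
  unfolding positive_def by (auto simp: selfadjoint_def intro!: exI[of _ 0])

lemma positive_of_real: "t \<ge> 0 \<Longrightarrow> positive (of_real t :: 'a::cstar_algebra_1)"
  unfolding positive_def by (auto simp: selfadjoint_of_real intro!: exI[of _ t])

lemma positive_one_minus: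
  "selfadjoint y \<Longrightarrow> norm y \<le> 1 \<Longrightarrow> positive (1 - (y::'a::cstar_algebra_1))"
  unfolding positive_def by (auto simp: selfadjoint_diff selfadjoint_one intro!: exI[of _ 1])

lemma positive_norm_minus:
  "selfadjoint h \<Longrightarrow> positive (of_real (norm h) - (h::'a::cstar_algebra_1))"
  unfolding positive_def by (auto simp: selfadjoint_diff selfadjoint_of_real intro!: exI[of _ "norm h"])

lemma positive_add:
  assumes "positive p" "positive (q::'a::cstar_algebra_1)"
  shows "positive (p + q)"
proof -
  obtain s where s: "s \<ge> 0" "norm (of_real s - p) \<le> s" using assms(1) by (auto simp: positive_def)
  obtain t where t: "t \<ge> 0" "norm (of_real t - q) \<le> t" using assms(2) by (auto simp: positive_def)
  have "norm (of_real (s + t) - (p + q)) = norm ((of_real s - p) + (of_real t - q))"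
    by (simp add: algebra_simps)
  also have "\<dots> \<le> s + t" using s t norm_triangle_ineq[of "of_real s - p" "of_real t - q"] by simp
  finally show ?thesis
    using assms s t by (auto simp: positive_def selfadjoint_add intro!: exI[of _ "s + t"])
qed

lemma positive_scaleR:
  assumes "positive p" "c \<ge> 0"
  shows "positive (c *\<^sub>R (p::'a::cstar_algebra_1))"
proof -
  obtain s where s: "s \<ge> 0" "norm (of_real s - p) \<le> s" using assms(1) by (auto simp: positive_def)
  have "of_real (c * s) - c *\<^sub>R p = c *\<^sub>R (of_real s - p :: 'a)"
    by (simp add: of_real_def scaleR_diff_right)
  hence "norm (of_real (c * s) - c *\<^sub>R p) = c * norm (of_real s - p)" using assms(2) by simp
  also have "\<dots> \<le> c * s" using s assms(2) by (simp add: mult_left_mono)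
  finally show ?thesis
    using assms s by (auto simp: positive_def selfadjoint_scaleR intro!: exI[of _ "c * s"])
qed

lemma positive_sqrtE:
  fixes h :: "'a::cstar_algebra_1"
  assumes "positive h"
  obtains g where "selfadjoint g" "g * g = h" "\<And>w. h * w = w * h \<Longrightarrow> g * w = w * g"
proof -
  obtain t where t: "t \<ge> 0" "norm (of_real t - h) \<le> t" and h: "selfadjoint h"
    using assms by (auto simp: positive_def)
  show ?thesis
  proof (cases "t = 0")
    case True
    hence "h = 0" using t by simp
    thus ?thesis by (intro that[of 0]) (simp_all add: selfadjoint_def)
  next
    case False
    hence tp: "t > 0" using t by simp
    define x where "x = (1 / t) *\<^sub>R (of_real t - h)"
    have nx: "norm x \<le> 1" using t tp by (simp add: x_def divide_le_eq_1)
    have sx: "selfadjoint x"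
      unfolding x_def by (intro selfadjoint_scaleR selfadjoint_diff selfadjoint_of_real h)
    show ?thesis
    proof (rule that[of "sqrt t *\<^sub>R sqrt_one_minus x"])
      show "selfadjoint (sqrt t *\<^sub>R sqrt_one_minus x)"
        by (intro selfadjoint_scaleR selfadjoint_sqrt_one_minus sx nx)
      have "(sqrt t *\<^sub>R sqrt_one_minus x) * (sqrt t *\<^sub>R sqrt_one_minus x) = t *\<^sub>R (1 - x)"
        using sqrt_one_minus_square[OF nx] t by simp
      also have "\<dots> = h" using tp by (simp add: x_def scaleR_diff_right of_real_def)
      finally show "(sqrt t *\<^sub>R sqrt_one_minus x) * (sqrt t *\<^sub>R sqrt_one_minus x) = h" .
    next
      fix w assume "h * w = w * h"
      hence "x * w = w * x" by (simp add: x_def algebra_simps of_real_mult_commute)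
      thus "(sqrt t *\<^sub>R sqrt_one_minus x) * w = w * (sqrt t *\<^sub>R sqrt_one_minus x)"
        using sqrt_one_minus_commute[OF nx] by simp
    qed
  qed
qed

lemma positive_mult_commute:
  fixes p q :: "'a::cstar_algebra_1"
  assumes "positive p" "positive q" "p * q = q * p"
  shows "positive (p * q)"
proof -
  obtain g1 where g1: "selfadjoint g1" "g1 * g1 = p" "\<And>w. p * w = w * p \<Longrightarrow> g1 * w = w * g1"
    using positive_sqrtE[OF assms(1)] by blast
  obtain g2 where g2: "selfadjoint g2" "g2 * g2 = q" "\<And>w. q * w = w * q \<Longrightarrow> g2 * w = w * g2"
    using positive_sqrtE[OF assms(2)] by blast
  have "g1 * q = q * g1" by (rule g1(3)) (rule assms(3))
  hence c: "g2 * g1 = g1 * g2" by (intro g2(3)) (rule sym)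
  have "(g1 * g2) * (g1 * g2) = g1 * (g2 * g1) * g2" by (simp add: mult.assoc)
  also have "\<dots> = p * q" by (simp add: c g1(2)[symmetric] g2(2)[symmetric] mult.assoc)
  finally have "p * q = (g1 * g2) * (g1 * g2)" ..
  moreover have "selfadjoint (g1 * g2)"
    using g1(1) g2(1) c by (simp add: selfadjoint_def cstar_mult)
  ultimately show ?thesis by (simp add: positive_square)
qed

lemma positive_power: "positive y \<Longrightarrow> positive ((y::'a::cstar_algebra_1) ^ n)"
proof (induction n)
  case 0 thus ?case using positive_of_real[of 1] by simp
next
  case (Suc n)
  thus ?case using positive_mult_commute[OF Suc.prems Suc.IH[OF Suc.prems]]
    by (simp add: power_commutes)
qed

lemma positive_sum:
  "(\<And>i. i \<in> A \<Longrightarrow> positive (f i)) \<Longrightarrow> positive (sum f A :: 'a::cstar_algebra_1)"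
  by (induction A rule: infinite_finite_induct) (simp_all add: positive_zero positive_add)

lemma norm_power_positive: "positive y \<Longrightarrow> norm ((y::'a::cstar_algebra_1) ^ n) = norm y ^ n"
proof -
  assume "positive y"
  then obtain g where g: "selfadjoint g" "g * g = y" by (rule positive_sqrtE)
  have "y ^ n = g ^ (2 * n)" using g(2) by (simp add: power_mult power2_eq_square)
  hence "norm (y ^ n) = norm g ^ (2 * n)" by (simp only: norm_power_selfadjoint[OF g(1)])
  also have "\<dots> = (norm g ^ 2) ^ n" by (simp add: power_mult)
  finally show ?thesis using norm_square_selfadjoint[OF g(1)] g(2) by simp
qed

lemma norm_le_of_positive_diff:
  fixes p :: "'a::cstar_algebra_1"
  assumes "positive p" "positive (of_real l - p)"
  shows "norm p \<le> l"
proof -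
  have "positive (of_real l :: 'a)" using positive_add[OF assms] by simp
  then obtain t where "t \<ge> 0" "norm (of_real t - of_real l :: 'a) \<le> t" by (auto simp: positive_def)
  hence "\<bar>t - l\<bar> \<le> t" by (simp only: of_real_diff[symmetric] norm_of_real)
  hence l: "l \<ge> 0" by simp
  obtain g1 where g1: "selfadjoint g1" "g1 * g1 = p" "\<And>w. p * w = w * p \<Longrightarrow> g1 * w = w * g1"
    using positive_sqrtE[OF assms(1)] by blast
  obtain g2 where g2: "selfadjoint g2" "g2 * g2 = of_real l - p"
    "\<And>w. (of_real l - p) * w = w * (of_real l - p) \<Longrightarrow> g2 * w = w * g2"
    using positive_sqrtE[OF assms(2)] by blast
  have "g1 * (of_real l - p) = (of_real l - p) * g1"
    using g1(3)[of "of_real l - p"] by (simp add: algebra_simps of_real_mult_commute)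
  hence "g1 * g2 = g2 * g1" by (intro g2(3)[THEN sym]) (rule sym)
  from norm_square_le_norm_add_square[OF g1(1) g2(1) this] show ?thesis using g1(2) g2(2) l by simp
qed

lemma norm_le_norm_add_positive:
  fixes p q :: "'a::cstar_algebra_1"
  assumes "positive p" "positive q"
  shows "norm p \<le> norm (p + q)"
proof -
  have "positive (of_real (norm (p + q)) - (p + q) + q)"
    by (intro positive_add positive_norm_minus assms selfadjoint_add positive_imp_selfadjoint)
  hence "positive (of_real (norm (p + q)) - p :: 'a)" by (simp add: algebra_simps)
  thus ?thesis by (rule norm_le_of_positive_diff[OF assms(1)])
qed


section \<open>Invertibility and the positivity of \<open>b\<^sup>* b\<close>\<close>

lemma invertible_one_minus:
  fixes q :: "'a::cstar_algebra_1"
  assumes "norm q < 1"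
  shows "invertible (1 - q)"
proof -
  have s: "summable (\<lambda>n. q ^ n)" by (rule complete_algebra_summable_geometric[OF assms])
  define S where "S = (\<Sum>n. q ^ n)"
  have h: "(\<Sum>n. q ^ Suc n) = S - 1" unfolding S_def using suminf_split_head[OF s] by simp
  have "q * S = (\<Sum>n. q * q ^ n)" unfolding S_def by (rule suminf_mult[OF s, symmetric])
  hence "(1 - q) * S = 1" using h by (simp add: left_diff_distrib)
  moreover have "S * q = (\<Sum>n. q ^ n * q)" unfolding S_def by (rule suminf_mult2[OF s])
  hence "S * (1 - q) = 1" using h by (simp add: right_diff_distrib power_commutes)
  ultimately show ?thesis unfolding invertible_def by blast
qed

lemma invertible_mult:
  assumes "invertible x" "invertible (y::'a::ring_1)"
  shows "invertible (x * y)"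
proof -
  obtain zx zy where z: "x * zx = 1" "zx * x = 1" "y * zy = 1" "zy * y = 1"
    using assms by (auto simp: invertible_def)
  have "(x * y) * (zy * zx) = x * (y * zy) * zx" "(zy * zx) * (x * y) = zy * (zx * x) * y"
    by (simp_all add: mult.assoc)
  hence "(x * y) * (zy * zx) = 1" "(zy * zx) * (x * y) = 1" using z by simp_all
  thus ?thesis unfolding invertible_def by blast
qed

lemma invertible_scaleR:
  assumes "c \<noteq> 0" "invertible (x::'a::real_algebra_1)"
  shows "invertible (c *\<^sub>R x)"
proof -
  obtain z where "x * z = 1" "z * x = 1" using assms(2) by (auto simp: invertible_def)
  hence "(c *\<^sub>R x) * ((1 / c) *\<^sub>R z) = 1" "((1 / c) *\<^sub>R z) * (c *\<^sub>R x) = 1"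
    using assms(1) by simp_all
  thus ?thesis unfolding invertible_def by blast
qed

lemma inverse_commute:
  assumes "x * z = 1" "z * x = 1" "x * w = w * x"
  shows "z * w = w * (z::'a::ring_1)"
proof -
  have "z * w = z * (w * x) * z" using assms(1) by (simp add: mult.assoc)
  also have "\<dots> = (z * x) * w * z" using assms(3) by (simp add: mult.assoc)
  finally show ?thesis using assms(2) by simp
qed

lemma invertible_one_add_mult_swap:
  assumes "invertible (1 + p * (q::'a::ring_1))"
  shows "invertible (1 + q * p)"
proof -
  obtain z where z: "(1 + p * q) * z = 1" "z * (1 + p * q) = 1"
    using assms by (auto simp: invertible_def)
  have "(1 + q * p) * (1 - q * z * p) = 1 + q * p - q * ((1 + p * q) * z) * p"
    "(1 - q * z * p) * (1 + q * p) = 1 + q * p - q * (z * (1 + p * q)) * p"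
    by (simp_all add: algebra_simps)
  thus ?thesis unfolding invertible_def using z by auto
qed

lemma invertible_of_real_add_positive:
  fixes g :: "'a::cstar_algebra_1"
  assumes "positive g" "l > 0"
  shows "invertible (of_real l + g)"
proof -
  obtain t where t: "t \<ge> 0" "norm (of_real t - g) \<le> t" using assms(1) by (auto simp: positive_def)
  have "(t + l) *\<^sub>R (1 - (1 / (t + l)) *\<^sub>R (of_real t - g)) = (t + l) *\<^sub>R 1 - (of_real t - g)"
    using t(1) assms(2) by (simp add: scaleR_diff_right)
  hence "of_real l + g = (t + l) *\<^sub>R (1 - (1 / (t + l)) *\<^sub>R (of_real t - g))"
    by (simp add: of_real_def algebra_simps)
  moreover have "norm ((1 / (t + l)) *\<^sub>R (of_real t - g)) < 1"
    using t assms(2) by (simp add: divide_less_eq)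
  ultimately show ?thesis
    using t(1) assms(2) by (simp add: invertible_scaleR invertible_one_minus)
qed

lemma one_minus_mult_sum_power: "(1 - y) * (\<Sum>n<N. y ^ n) = 1 - (y::'a::ring_1) ^ N"
  by (induction N) (simp_all add: distrib_left left_diff_distrib)

lemma norm_sum_powers_ge:
  fixes y :: "'a::cstar_algebra_1"
  assumes y: "positive y" "norm y = 1"
  shows "real (Suc M) \<le> norm (\<Sum>n<Suc M. y ^ n)"
proof -
  \<comment> \<open>Every \<open>y\<^sup>n\<close> dominates \<open>y\<^sup>M\<close> for \<open>n \<le> M\<close>.\<close>
  define Q where "Q = (\<Sum>n<Suc M. y ^ n * (1 - y ^ (M - n)))"
  have "Q = (\<Sum>n<Suc M. y ^ n - y ^ M)"
    unfolding Q_def by (intro sum.cong refl) (simp add: right_diff_distrib power_add[symmetric])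
  hence sum: "(\<Sum>n<Suc M. y ^ n) = real (Suc M) *\<^sub>R y ^ M + Q"
    by (simp add: sum_subtractf scaleR_conv_of_real)
  have "positive Q" unfolding Q_def
  proof (rule positive_sum)
    fix n
    have "positive (1 - y ^ (M - n))"
      using y by (simp add: positive_one_minus selfadjoint_power positive_imp_selfadjoint
          norm_power_positive)
    moreover have "y ^ n * (1 - y ^ (M - n)) = (1 - y ^ (M - n)) * y ^ n"
      by (simp add: algebra_simps power_add[symmetric] add.commute)
    ultimately show "positive (y ^ n * (1 - y ^ (M - n)))"
      by (rule positive_mult_commute[OF positive_power[OF y(1)]])
  qed
  hence "norm (real (Suc M) *\<^sub>R y ^ M) \<le> norm (\<Sum>n<Suc M. y ^ n)"
    unfolding sum by (intro norm_le_norm_add_positive positive_scaleR positive_power y(1)) simp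
  thus ?thesis using norm_power_positive[OF y(1), of M] y(2) by simp
qed

text \<open>If \<open>1 - y\<close> had an inverse \<open>z\<close>, the partial sums of \<open>\<Sum> y\<^sup>n\<close> would be bounded by
  \<open>2 \<parallel>z\<parallel>\<close>, yet they grow linearly.\<close>

lemma not_invertible_one_minus:
  fixes y :: "'a::cstar_algebra_1"
  assumes y: "positive y" "norm y = 1"
  shows "\<not> invertible (1 - y)"
proof
  assume "invertible (1 - y)"
  then obtain z where z: "z * (1 - y) = 1" by (auto simp: invertible_def)
  have upper: "norm (\<Sum>n<N. y ^ n) \<le> 2 * norm z" for N
  proof -
    have "(\<Sum>n<N. y ^ n) = z * ((1 - y) * (\<Sum>n<N. y ^ n))" using z by (simp flip: mult.assoc)
    hence "norm (\<Sum>n<N. y ^ n) \<le> norm z * norm (1 - y ^ N)"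
      by (simp add: one_minus_mult_sum_power norm_mult_ineq)
    moreover have "norm (1 - y ^ N) \<le> 2"
      using norm_triangle_ineq4[of 1 "y ^ N"] norm_power_positive[OF y(1), of N] y(2) by simp
    hence "norm z * norm (1 - y ^ N) \<le> norm z * 2" by (simp add: mult_left_mono)
    ultimately show ?thesis by linarith
  qed
  define M where "M = nat \<lceil>2 * norm z\<rceil>"
  have "real (Suc M) \<le> 2 * norm z" using norm_sum_powers_ge[OF y, of M] upper[of "Suc M"] by linarith
  moreover have "2 * norm z \<le> real M" unfolding M_def by linarith
  ultimately show False by simp
qed

lemma not_invertible_norm_square_minus_square:
  fixes k :: "'a::cstar_algebra_1"
  assumes "selfadjoint k" "k \<noteq> 0"
  shows "\<not> invertible (of_real (norm k ^ 2) - k * k)"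
proof
  define y where "y = (1 / norm k ^ 2) *\<^sub>R (k * k)"
  have "positive y" unfolding y_def by (intro positive_scaleR positive_square assms(1)) simp
  moreover have "norm y = 1" using norm_square_selfadjoint[OF assms(1)] assms(2) by (simp add: y_def)
  moreover assume "invertible (of_real (norm k ^ 2) - k * k)"
  hence "invertible ((1 / norm k ^ 2) *\<^sub>R (of_real (norm k ^ 2) - k * k))"
    using assms(2) by (intro invertible_scaleR) simp_all
  hence "invertible (1 - y)" using assms(2) by (simp add: y_def scaleR_diff_right of_real_def)
  ultimately show False using not_invertible_one_minus by blast
qed

lemma positive_if_invertible_add_of_real:
  fixes h :: "'a::cstar_algebra_1"
  assumes h: "selfadjoint h" and inv: "\<And>l. l > 0 \<Longrightarrow> invertible (h + of_real l)"
  shows "positive h"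
proof (cases "h = 0")
  case False
  define c where "c = norm h"
  have c: "c > 0" using False by (simp add: c_def)
  define k where "k = 1 - (1 / c) *\<^sub>R h"
  have k: "selfadjoint k" unfolding k_def by (intro selfadjoint_diff selfadjoint_one selfadjoint_scaleR h)
  have "norm k \<le> 1"
  proof (rule ccontr)
    assume "\<not> norm k \<le> 1"
    hence \<kappa>: "norm k > 1" by simp
    have "of_real (norm k) - k = (1 / c) *\<^sub>R (h + of_real ((norm k - 1) * c))"
      using c by (simp add: k_def scaleR_add_right of_real_def algebra_simps)
    hence minus: "invertible (of_real (norm k) - k)"
      using c \<kappa> by (simp only:) (intro invertible_scaleR inv, simp_all)
    have small: "norm ((1 / (r + 1)) *\<^sub>R ((1 / c) *\<^sub>R h)) < 1" if "r > 0" for r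
      using c that by (simp add: c_def)
    have "(norm k + 1) *\<^sub>R (1 - (1 / (norm k + 1)) *\<^sub>R ((1 / c) *\<^sub>R h))
        = (norm k + 1) *\<^sub>R 1 - (1 / c) *\<^sub>R h"
      using \<kappa> by (simp add: scaleR_diff_right)
    hence "of_real (norm k) + k = (norm k + 1) *\<^sub>R (1 - (1 / (norm k + 1)) *\<^sub>R ((1 / c) *\<^sub>R h))"
      by (simp add: k_def of_real_def scaleR_add_left)
    hence "invertible (of_real (norm k) + k)"
      using \<kappa> by (simp only:) (intro invertible_scaleR invertible_one_minus small, linarith+)
    with minus have "invertible ((of_real (norm k) - k) * (of_real (norm k) + k))"
      by (rule invertible_mult)
    moreover have "(of_real (norm k) - k) * (of_real (norm k) + k) = of_real (norm k ^ 2) - k * k"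
      by (simp add: algebra_simps of_real_def power2_eq_square)
    moreover have "k \<noteq> 0" using \<kappa> by auto
    ultimately show False using not_invertible_norm_square_minus_square[OF k] by simp
  qed
  moreover have "of_real c - h = c *\<^sub>R k" using c by (simp add: k_def of_real_def scaleR_diff_right)
  ultimately have "norm (of_real c - h) \<le> c" using c by (simp add: mult_left_le)
  thus ?thesis using h c unfolding positive_def by (intro conjI exI[of _ c]) simp_all
qed (simp add: positive_zero)

text \<open>Kaplansky's step: \<open>x x\<^sup>* + x\<^sup>* x = 2 (h\<^sup>2 + k\<^sup>2)\<close> for the real and imaginary parts
  \<open>h\<close>, \<open>k\<close> of \<open>x\<close>.\<close>

lemma positive_mult_cstar_if_positive_uminus:
  fixes x :: "'a::cstar_algebra_1"
  assumes "positive (- (cstar x * x))"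
  shows "positive (x * cstar x)"
proof -
  define p where "p = x + cstar x"
  define q where "q = (- \<i>) *\<^sub>C (x - cstar x)"
  have "selfadjoint p" by (simp add: p_def selfadjoint_def cstar_add cstar_cstar add.commute)
  moreover have "selfadjoint q"
    by (simp add: q_def selfadjoint_def cstar_scaleC cstar_diff cstar_cstar scaleC_diff_right
        scaleC_minus_left)
  ultimately have "positive ((1/2::real) *\<^sub>R (p * p + q * q) + (- (cstar x * x)))"
    by (intro positive_add positive_scaleR positive_square assms) simp_all
  moreover have "q * q = - ((x - cstar x) * (x - cstar x))"
    by (simp add: q_def mult_scaleC_left mult_scaleC_right scaleC_scaleC scaleC_minus_left
        scaleC_minus_right scaleC_one)
  hence "p * p + q * q = 2 *\<^sub>R (x * cstar x + cstar x * x)"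
    by (simp add: p_def algebra_simps scaleR_2)
  ultimately show ?thesis by simp
qed

lemma positive_uminus_cstar_mult_imp_zero:
  fixes x :: "'a::cstar_algebra_1"
  assumes "positive (- (cstar x * x))"
  shows "x = 0"
proof (rule ccontr)
  assume "x \<noteq> 0"
  define x' where "x' = (1 / norm x) *\<^sub>R x"
  have eq: "- (cstar x' * x') = (1 / norm x ^ 2) *\<^sub>R (- (cstar x * x))"
    by (simp add: x'_def cstar_scaleR power2_eq_square)
  have "positive ((1 / norm x ^ 2) *\<^sub>R (- (cstar x * x)))" using assms by (rule positive_scaleR) simp
  hence p: "positive (- (cstar x' * x'))" by (simp only: eq)
  have "norm x' = 1" using \<open>x \<noteq> 0\<close> by (simp add: x'_def)
  hence n: "norm (- (cstar x' * x')) = 1" by (simp add: cstar_identity)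
  have "invertible (of_real 1 + x' * cstar x')"
    by (intro invertible_of_real_add_positive positive_mult_cstar_if_positive_uminus p) simp
  hence "invertible (1 - (- (cstar x' * x')))"
    using invertible_one_add_mult_swap[of x' "cstar x'"] by simp
  thus False using not_invertible_one_minus[OF p n] by blast
qed

lemma positive_if_square_eq_mult:
  fixes g v :: "'a::cstar_algebra_1"
  assumes v: "selfadjoint v" and g: "positive g" and gv: "g * v = v * g" and vv: "v * v = g * v"
  shows "positive v"
proof (rule positive_if_invertible_add_of_real[OF v])
  fix l :: real assume l: "l > 0"
  obtain z where z: "(of_real l + g) * z = 1" "z * (of_real l + g) = 1"
    using invertible_of_real_add_positive[OF g l] by (auto simp: invertible_def)
  \<comment> \<open>Since \<open>v (v - g) = 0\<close>, the inverse of \<open>v + l\<close> is \<open>(1 - z v) / l\<close> with \<open>z = (l + g)\<^sup>-\<^sup>1\<close>.\<close>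
  have "(of_real l + g) * v = v * (of_real l + g)"
    by (simp only: distrib_left distrib_right gv of_real_mult_commute)
  hence zv: "z * v = v * z" by (rule inverse_commute[OF z])
  have vl: "(v + of_real l) * v = (of_real l + g) * v"
    by (simp only: distrib_right vv add.commute)
  have "(v + of_real l) * (1 - z * v) = of_real l"
  proof -
    have "(v + of_real l) * z = z * (v + of_real l)"
      by (simp only: distrib_left distrib_right zv of_real_mult_commute)
    hence "((v + of_real l) * z) * v = v"
      using z(2) by (simp only: mult.assoc vl) (simp flip: mult.assoc)
    thus ?thesis by (simp add: right_diff_distrib mult.assoc[symmetric])
  qed
  moreover have "(1 - z * v) * (v + of_real l) = of_real l"
  proof -
    have "v * (v + of_real l) = (v + of_real l) * v"
      by (simp only: distrib_left distrib_right of_real_mult_commute)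
    hence "z * (v * (v + of_real l)) = v"
      using z(2) by (simp only: vl) (simp flip: mult.assoc)
    thus ?thesis by (simp add: left_diff_distrib mult.assoc)
  qed
  ultimately have "(v + of_real l) * ((1 / l) *\<^sub>R (1 - z * v)) = 1"
    "((1 / l) *\<^sub>R (1 - z * v)) * (v + of_real l) = 1"
    using l by (simp_all add: of_real_def)
  thus "invertible (v + of_real l)" unfolding invertible_def by blast
qed

text \<open>\<open>g = |h|\<close>, and \<open>v\<close> is the negative part of \<open>h\<close>.\<close>

lemma selfadjoint_abs_decompE:
  fixes h :: "'a::cstar_algebra_1"
  assumes h: "selfadjoint h" "norm h = 1"
  obtains g v where "positive g" "positive v" "h = g - 2 *\<^sub>R v" "g * v = v * g" "v * v = g * v"
proof -
  define x where "x = 1 - h * h"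
  have nx: "norm x \<le> 1" using norm_of_real_minus_square_le[OF h(1)] h(2) by (simp add: x_def)
  have sx: "selfadjoint x"
    unfolding x_def by (intro selfadjoint_diff selfadjoint_one selfadjoint_mult_self h(1))
  define g where "g = sqrt_one_minus x"
  have gg: "g * g = h * h" using sqrt_one_minus_square[OF nx] by (simp add: g_def x_def)
  have sg: "selfadjoint g" using selfadjoint_sqrt_one_minus[OF sx nx] by (simp add: g_def)
  have pg: "positive g"
    using norm_one_minus_sqrt_one_minus_le[OF nx] sg unfolding positive_def g_def
    by (intro conjI exI[of _ 1]) simp_all
  have gh: "g * h = h * g"
    using sqrt_one_minus_commute[OF nx, of h] by (simp add: g_def x_def algebra_simps mult.assoc)
  define v where "v = (1/2::real) *\<^sub>R (g - h)"
  have gv: "g * v = v * g" using gh by (simp add: v_def algebra_simps)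
  have "v * v = (1/4::real) *\<^sub>R (g * g - g * h - h * g + h * h)"
    by (simp add: v_def algebra_simps)
  also have "\<dots> = g * v"
    using gg gh by (simp add: v_def algebra_simps flip: scaleR_add_left)
  finally have vv: "v * v = g * v" .
  have "positive v"
    by (rule positive_if_square_eq_mult[OF _ pg gv vv])
      (simp add: v_def selfadjoint_scaleR selfadjoint_diff sg h(1))
  moreover have "h = g - 2 *\<^sub>R v" by (simp add: v_def)
  ultimately show ?thesis using that pg gv vv by blast
qed

text \<open>For \<open>\<parallel>b\<parallel> = 1\<close> write \<open>b\<^sup>* b = g - 2v\<close> as above;
  then \<open>y = b v\<close> has \<open>y\<^sup>* y = - v\<^sup>3 \<le> 0\<close>, so \<open>y = 0\<close>, \<open>v = 0\<close> and \<open>b\<^sup>* b = g\<close>.\<close>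

lemma positive_cstar_mult: "positive (cstar b * (b::'a::cstar_algebra_1))"
proof -
  have unit: "positive (cstar b * b)" if b: "norm b = 1" for b :: 'a
  proof -
    define h where "h = cstar b * b"
    have sh: "selfadjoint h" by (simp add: h_def selfadjoint_def cstar_mult cstar_cstar)
    have nh: "norm h = 1" using b by (simp add: h_def cstar_identity)
    obtain g v where pg: "positive g" and pv: "positive v" and hv: "h = g - 2 *\<^sub>R v"
      and gv: "g * v = v * g" and vv: "v * v = g * v"
      using selfadjoint_abs_decompE[OF sh nh] by blast
    have sv: "cstar v = v" using positive_imp_selfadjoint[OF pv] by (simp add: selfadjoint_def)
    have "cstar (b * v) * (b * v) = v * h * v" by (simp add: cstar_mult sv h_def mult.assoc)
    also have "\<dots> = - (v * v * v)"
      by (simp add: hv algebra_simps scaleR_2) (simp add: gv[symmetric] vv mult.assoc)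
    finally have v3: "- (cstar (b * v) * (b * v)) = v * v * v" by simp
    moreover have "positive (v * v * v)"
      using positive_power[OF pv, of 3] by (simp add: numeral_3_eq_3 mult.assoc)
    ultimately have "b * v = 0" using positive_uminus_cstar_mult_imp_zero[of "b * v"] by simp
    hence "(v * v) * (v * v) = 0" using v3 by (simp add: mult.assoc[symmetric])
    hence "norm (v * v) = 0"
      using norm_square_selfadjoint[OF selfadjoint_mult_self[OF positive_imp_selfadjoint[OF pv]]]
      by simp
    hence "v = 0" using norm_square_selfadjoint[OF positive_imp_selfadjoint[OF pv]] by simp
    thus ?thesis using pg hv by (simp add: h_def)
  qed
  show ?thesis
  proof (cases "b = 0")
    case False
    define b' where "b' = (1 / norm b) *\<^sub>R b"
    have "positive ((norm b)\<^sup>2 *\<^sub>R (cstar b' * b'))"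
      using False by (intro positive_scaleR unit) (simp_all add: b'_def)
    moreover have "(norm b)\<^sup>2 *\<^sub>R (cstar b' * b') = cstar b * b"
      using False by (simp add: b'_def cstar_scaleR power2_eq_square)
    ultimately show ?thesis by simp
  qed (simp add: positive_zero)
qed


section \<open>The unitization of a C*-algebra\<close>

datatype 'a unitization = Unitize (uscal: complex) (uvec: 'a)

lemma unitization_eqI: "uscal x = uscal y \<Longrightarrow> uvec x = uvec y \<Longrightarrow> x = y"
  by (cases x, cases y) simp

instantiation unitization :: (cstar_algebra) ring_1
begin

definition "0 = Unitize 0 0"
definition "1 = Unitize 1 0"
definition "x + y = Unitize (uscal x + uscal y) (uvec x + uvec y)"
definition "x - y = Unitize (uscal x - uscal y) (uvec x - uvec y)"
definition "- x = Unitize (- uscal x) (- uvec x)"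
definition "x * y = Unitize (uscal x * uscal y)
  (uscal x *\<^sub>C uvec y + uscal y *\<^sub>C uvec x + uvec x * uvec y)"

instance
proof
  fix a b c :: "'a unitization"
  show "a + b + c = a + (b + c)" by (simp add: plus_unitization_def add.assoc)
  show "a + b = b + a" by (simp add: plus_unitization_def add.commute)
  show "0 + a = a" by (simp add: plus_unitization_def zero_unitization_def)
  show "- a + a = 0" by (simp add: plus_unitization_def zero_unitization_def uminus_unitization_def)
  show "a - b = a + - b"
    by (simp add: plus_unitization_def minus_unitization_def uminus_unitization_def)
  show "a * b * c = a * (b * c)"
    by (simp add: times_unitization_def algebra_simps scaleC_add_right mult_scaleC_left
        mult_scaleC_right scaleC_scaleC)
  show "1 * a = a" by (simp add: times_unitization_def one_unitization_def scaleC_one)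
  show "a * 1 = a" by (simp add: times_unitization_def one_unitization_def scaleC_one)
  show "(a + b) * c = a * c + b * c"
    by (simp add: times_unitization_def plus_unitization_def algebra_simps scaleC_add_right
        scaleC_add_left)
  show "a * (b + c) = a * b + a * c"
    by (simp add: times_unitization_def plus_unitization_def algebra_simps scaleC_add_right
        scaleC_add_left)
  show "(0::'a unitization) \<noteq> 1" by (simp add: zero_unitization_def one_unitization_def)
qed

end

lemma uscal_simps [simp]:
  "uscal 0 = 0" "uscal 1 = 1" "uscal (x + y) = uscal x + uscal y"
  "uscal (x - y) = uscal x - uscal y" "uscal (- x) = - uscal x" "uscal (x * y) = uscal x * uscal y"
  by (simp_all add: zero_unitization_def one_unitization_def plus_unitization_def
      minus_unitization_def uminus_unitization_def times_unitization_def)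

lemma uvec_simps [simp]:
  "uvec (0::'a::cstar_algebra unitization) = 0" "uvec (1::'a::cstar_algebra unitization) = 0"
  "uvec (x + y) = uvec x + uvec y" "uvec (x - y) = uvec x - uvec y" "uvec (- x) = - uvec x"
  "uvec (x * y) = uscal x *\<^sub>C uvec y + uscal y *\<^sub>C uvec x + uvec x * uvec y"
  by (simp_all add: zero_unitization_def one_unitization_def plus_unitization_def
      minus_unitization_def uminus_unitization_def times_unitization_def)

instantiation unitization :: (cstar_algebra) complex_vec
begin

definition "scaleC_unitization c x = Unitize (c * uscal x) (c *\<^sub>C uvec x)"

instance
  by standard (simp_all add: scaleC_unitization_def plus_unitization_def scaleC_add_right
      scaleC_add_left scaleC_scaleC scaleC_one algebra_simps)

end

lemma uscal_scaleC [simp]: "uscal (c *\<^sub>C x) = c * uscal x"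
  and uvec_scaleC [simp]: "uvec (c *\<^sub>C x) = c *\<^sub>C uvec x"
  by (simp_all add: scaleC_unitization_def)

instantiation unitization :: (cstar_algebra) real_algebra_1
begin

definition "scaleR_unitization r (x::'a unitization) = complex_of_real r *\<^sub>C x"

instance
proof
  fix a b :: real and x y :: "'a unitization"
  show "a *\<^sub>R (x + y) = a *\<^sub>R x + a *\<^sub>R y" by (simp add: scaleR_unitization_def scaleC_add_right)
  show "(a + b) *\<^sub>R x = a *\<^sub>R x + b *\<^sub>R x" by (simp add: scaleR_unitization_def scaleC_add_left)
  show "a *\<^sub>R b *\<^sub>R x = (a * b) *\<^sub>R x" by (simp add: scaleR_unitization_def scaleC_scaleC)
  show "1 *\<^sub>R x = x" by (simp add: scaleR_unitization_def scaleC_one)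
  show "a *\<^sub>R x * y = a *\<^sub>R (x * y)"
    by (rule unitization_eqI) (simp_all add: scaleR_unitization_def scaleC_add_right
        mult_scaleC_left mult_scaleC_right scaleC_scaleC mult.commute)
  show "x * a *\<^sub>R y = a *\<^sub>R (x * y)"
    by (rule unitization_eqI) (simp_all add: scaleR_unitization_def scaleC_add_right
        mult_scaleC_left mult_scaleC_right scaleC_scaleC mult.commute algebra_simps)
qed

end

text \<open>The norm of \<open>(\<lambda>, a)\<close> is the maximum of \<open>|\<lambda>|\<close> and the operator norm of \<open>y \<mapsto> \<lambda> y + a y\<close>
  on \<^typ>\<open>'a\<close>. The operator norm alone vanishes on \<open>(1, -e)\<close> if \<^typ>\<open>'a\<close> has a unit \<open>e\<close>.\<close>

definition ulmult :: "'a::cstar_algebra unitization \<Rightarrow> 'a \<Rightarrow> 'a" where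
  "ulmult x y = uscal x *\<^sub>C y + uvec x * y"

definition ulmult_norm :: "'a::cstar_algebra unitization \<Rightarrow> real" where
  "ulmult_norm x = (SUP y\<in>{y. norm y \<le> 1}. norm (ulmult x y))"

definition ustar :: "'a::cstar_algebra unitization \<Rightarrow> 'a unitization" where
  "ustar x = Unitize (cnj (uscal x)) (cstar (uvec x))"

lemma norm_ulmult_le_sum: "norm y \<le> 1 \<Longrightarrow> norm (ulmult x y) \<le> cmod (uscal x) + norm (uvec x)"
proof -
  assume y: "norm y \<le> 1"
  have "norm (ulmult x y) \<le> cmod (uscal x) * norm y + norm (uvec x) * norm y"
    unfolding ulmult_def
    by (rule order_trans[OF norm_triangle_ineq add_mono]) (simp_all add: norm_scaleC norm_mult_ineq)
  also have "\<dots> \<le> cmod (uscal x) + norm (uvec x)"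
    using y by (intro add_mono mult_left_le) simp_all
  finally show ?thesis .
qed

lemma norm_ulmult_le_ulmult_norm: "norm y \<le> 1 \<Longrightarrow> norm (ulmult x y) \<le> ulmult_norm x"
  unfolding ulmult_norm_def
  by (rule cSUP_upper) (auto intro!: bdd_aboveI[of _ "cmod (uscal x) + norm (uvec x)"] norm_ulmult_le_sum)

lemma ulmult_norm_le: "(\<And>y. norm y \<le> 1 \<Longrightarrow> norm (ulmult x y) \<le> M) \<Longrightarrow> ulmult_norm x \<le> M"
  unfolding ulmult_norm_def by (rule cSUP_least) (auto intro: exI[of _ 0])

lemma ulmult_norm_nonneg: "ulmult_norm x \<ge> 0"
  using norm_ulmult_le_ulmult_norm[of 0 x] by (simp add: ulmult_def)

lemma ulmult_norm_le_sum: "ulmult_norm x \<le> cmod (uscal x) + norm (uvec x)"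
  by (rule ulmult_norm_le) (rule norm_ulmult_le_sum)

lemma ulmult_add: "ulmult (x + x') y = ulmult x y + ulmult x' y"
  by (simp add: ulmult_def scaleC_add_left algebra_simps)

lemma ulmult_scaleC: "ulmult (c *\<^sub>C x) y = c *\<^sub>C ulmult x y"
  by (simp add: ulmult_def scaleC_add_right mult_scaleC_left scaleC_scaleC)

lemma ulmult_mult: "ulmult (x * x') y = ulmult x (ulmult x' y)"
  by (simp add: ulmult_def scaleC_add_right scaleC_add_left mult_scaleC_left mult_scaleC_right
      scaleC_scaleC algebra_simps)

lemma ulmult_scaleR_right: "ulmult x (r *\<^sub>R y) = r *\<^sub>R ulmult x y"
  by (simp add: ulmult_def scaleR_scaleC scaleC_scaleC scaleC_add_right mult_scaleC_right
      mult.commute)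

lemma norm_ulmult_le: "norm (ulmult x y) \<le> ulmult_norm x * norm y"
proof (cases "y = 0")
  case False
  have "norm (ulmult x ((1 / norm y) *\<^sub>R y)) \<le> ulmult_norm x"
    using False by (intro norm_ulmult_le_ulmult_norm) simp
  thus ?thesis using False by (simp add: ulmult_scaleR_right field_simps)
qed (simp add: ulmult_def)

lemma ulmult_norm_triangle: "ulmult_norm (x + x') \<le> ulmult_norm x + ulmult_norm x'"
  by (rule ulmult_norm_le) (simp add: ulmult_add norm_triangle_le add_mono
      norm_ulmult_le_ulmult_norm)

lemma ulmult_norm_scaleC: "ulmult_norm (c *\<^sub>C x) = cmod c * ulmult_norm x"
proof -
  have le: "ulmult_norm (c *\<^sub>C x) \<le> cmod c * ulmult_norm x" for c x
    by (rule ulmult_norm_le)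
      (simp add: ulmult_scaleC norm_scaleC mult_left_mono norm_ulmult_le_ulmult_norm)
  show ?thesis
  proof (cases "c = 0")
    case False
    have "ulmult_norm x \<le> cmod (inverse c) * ulmult_norm (c *\<^sub>C x)"
      using le[of "inverse c" "c *\<^sub>C x"] False by (simp add: scaleC_scaleC scaleC_one)
    hence "ulmult_norm x \<le> ulmult_norm (c *\<^sub>C x) / cmod c"
      by (simp add: norm_inverse divide_inverse mult.commute)
    hence "cmod c * ulmult_norm x \<le> ulmult_norm (c *\<^sub>C x)"
      using False by (simp add: pos_le_divide_eq mult.commute)
    thus ?thesis using le[of c x] by simp
  qed (use le[of 0 x] ulmult_norm_nonneg[of "0 *\<^sub>C x"] in simp)
qed

lemma ulmult_norm_mult: "ulmult_norm (x * x') \<le> ulmult_norm x * ulmult_norm x'"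
proof (rule ulmult_norm_le)
  fix y :: 'a assume "norm y \<le> 1"
  hence "norm (ulmult x (ulmult x' y)) \<le> ulmult_norm x * ulmult_norm x'"
    by (intro order_trans[OF norm_ulmult_le] mult_left_mono norm_ulmult_le_ulmult_norm
        ulmult_norm_nonneg)
  thus "norm (ulmult (x * x') y) \<le> ulmult_norm x * ulmult_norm x'" by (simp add: ulmult_mult)
qed

lemma ustar_ustar: "ustar (ustar x) = x"
  by (simp add: ustar_def cstar_cstar)

lemma ulmult_ustar_mult: "cstar (ulmult x y) * ulmult x y = cstar y * ulmult (ustar x * x) y"
  by (simp add: ulmult_def ustar_def cstar_add cstar_scaleC cstar_mult scaleC_add_right
      scaleC_add_left mult_scaleC_left mult_scaleC_right scaleC_scaleC algebra_simps
      mult.commute[of "cnj _"])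

lemma ulmult_norm_square_le: "ulmult_norm x ^ 2 \<le> ulmult_norm (ustar x * x)"
proof -
  have "ulmult_norm x \<le> sqrt (ulmult_norm (ustar x * x))"
  proof (rule ulmult_norm_le)
    fix y :: 'a assume y: "norm y \<le> 1"
    have "norm (ulmult x y) ^ 2 = norm (cstar y * ulmult (ustar x * x) y)"
      by (simp add: cstar_identity[symmetric] ulmult_ustar_mult)
    also have "\<dots> \<le> norm y * (ulmult_norm (ustar x * x) * norm y)"
      using norm_mult_ineq[of "cstar y"] by (simp add: order_trans[OF _ mult_left_mono[OF norm_ulmult_le]])
    also have "\<dots> = ulmult_norm (ustar x * x) * (norm y * norm y)" by (simp add: algebra_simps)
    also have "\<dots> \<le> ulmult_norm (ustar x * x)"
      using y ulmult_norm_nonneg[of "ustar x * x"] by (simp add: mult_left_le mult_le_one)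
    finally show "norm (ulmult x y) \<le> sqrt (ulmult_norm (ustar x * x))" by (simp add: real_le_rsqrt)
  qed
  hence "ulmult_norm x ^ 2 \<le> sqrt (ulmult_norm (ustar x * x)) ^ 2"
    by (rule power_mono[OF _ ulmult_norm_nonneg])
  thus ?thesis using ulmult_norm_nonneg[of "ustar x * x"] by simp
qed

lemma ulmult_norm_ustar: "ulmult_norm (ustar x) = ulmult_norm x"
proof -
  have le: "ulmult_norm z \<le> ulmult_norm (ustar z)" for z :: "'a unitization"
  proof (cases "ulmult_norm z = 0")
    case False
    have "ulmult_norm z * ulmult_norm z \<le> ulmult_norm (ustar z) * ulmult_norm z"
      using ulmult_norm_square_le[of z] ulmult_norm_mult[of "ustar z" z] by (simp add: power2_eq_square)
    thus ?thesis using False ulmult_norm_nonneg[of z] by (simp add: mult_le_cancel_right)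
  qed (simp add: ulmult_norm_nonneg)
  show ?thesis using le[of x] le[of "ustar x"] by (simp add: ustar_ustar)
qed

lemma ulmult_norm_ustar_mult: "ulmult_norm (ustar x * x) = ulmult_norm x ^ 2"
  using ulmult_norm_square_le[of x] ulmult_norm_mult[of "ustar x" x]
  by (simp add: ulmult_norm_ustar power2_eq_square)

text \<open>Testing against \<open>y = a\<^sup>* / \<parallel>a\<parallel>\<close> recovers \<open>\<parallel>a\<parallel>\<close> from \<open>\<parallel>\<lambda> y + a y\<parallel>\<close> up to \<open>|\<lambda>|\<close>.\<close>

lemma norm_uvec_le: "norm (uvec x) \<le> ulmult_norm x + cmod (uscal x)"
proof (cases "uvec x = 0")
  case False
  define a where "a = uvec x"
  have a: "norm a > 0" using False by (simp add: a_def)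
  define y where "y = (1 / norm a) *\<^sub>R cstar a"
  have "ulmult x y = (1 / norm a) *\<^sub>R (uscal x *\<^sub>C cstar a + a * cstar a)"
    unfolding y_def ulmult_scaleR_right by (simp add: ulmult_def a_def)
  moreover have "norm (uscal x *\<^sub>C cstar a + a * cstar a) \<ge> norm a ^ 2 - cmod (uscal x) * norm a"
    using norm_triangle_ineq2[of "a * cstar a" "- (uscal x *\<^sub>C cstar a)"]
    by (simp add: norm_mult_cstar norm_scaleC add.commute)
  ultimately have "norm (ulmult x y) \<ge> (norm a ^ 2 - cmod (uscal x) * norm a) / norm a"
    using a by (simp add: divide_right_mono)
  also have "(norm a ^ 2 - cmod (uscal x) * norm a) / norm a = norm a - cmod (uscal x)"
    using a by (simp add: field_simps power2_eq_square)
  finally have "norm (ulmult x y) \<ge> norm a - cmod (uscal x)" .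
  moreover have "norm (ulmult x y) \<le> ulmult_norm x"
    using a by (intro norm_ulmult_le_ulmult_norm) (simp add: y_def)
  ultimately show ?thesis by (simp add: a_def)
qed (simp add: ulmult_norm_nonneg)

lemma ulmult_norm_Unitize_0: "ulmult_norm (Unitize 0 a) = norm a"
  using norm_uvec_le[of "Unitize 0 a"] ulmult_norm_le_sum[of "Unitize 0 a"] by simp

instantiation unitization :: (cstar_algebra) real_normed_algebra_1
begin

definition norm_unitization :: "'a unitization \<Rightarrow> real" where
  "norm_unitization x = max (cmod (uscal x)) (ulmult_norm x)"

definition sgn_unitization_def: "sgn (x::'a unitization) = x /\<^sub>R norm x"

definition dist_unitization_def: "dist (x::'a unitization) y = norm (x - y)"

definition uniformity_unitization_def [code del]:
  "(uniformity :: ('a unitization \<times> 'a unitization) filter) =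
    (INF e\<in>{0 <..}. principal {(x, y). dist x y < e})"

definition open_unitization_def [code del]:
  "open (U :: 'a unitization set) \<longleftrightarrow>
    (\<forall>x\<in>U. eventually (\<lambda>(x', y). x' = x \<longrightarrow> y \<in> U) uniformity)"

instance
proof
  fix r :: real and x y :: "'a unitization"
  show "(norm x = 0) = (x = 0)"
  proof
    assume "norm x = 0"
    hence "uscal x = 0" "ulmult_norm x = 0"
      using ulmult_norm_nonneg[of x] by (auto simp: norm_unitization_def max_def split: if_splits)
    thus "x = 0" using norm_uvec_le[of x] by (intro unitization_eqI) simp_all
  qed (simp add: norm_unitization_def zero_unitization_def ulmult_norm_Unitize_0)
  show "norm (x + y) \<le> norm x + norm y"
    using norm_triangle_ineq[of "uscal x" "uscal y"] ulmult_norm_triangle[of x y]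
    by (simp add: norm_unitization_def max_def)
  show "norm (r *\<^sub>R x) = \<bar>r\<bar> * norm x"
    by (simp add: norm_unitization_def scaleR_unitization_def ulmult_norm_scaleC norm_mult
        max_mult_distrib_left)
  show "norm (x * y) \<le> norm x * norm y"
    using ulmult_norm_mult[of x y]
    by (auto simp: norm_unitization_def norm_mult intro!: mult_mono' ulmult_norm_nonneg
        elim: order_trans)
  have "ulmult_norm (1::'a unitization) \<le> 1" by (rule ulmult_norm_le) (simp add: ulmult_def scaleC_one)
  thus "norm (1::'a unitization) = 1" by (simp add: norm_unitization_def)
qed (rule sgn_unitization_def dist_unitization_def open_unitization_def uniformity_unitization_def)+

end

lemma norm_le_uscal_uvec: "norm x \<le> cmod (uscal x) + norm (uvec x)"
  using ulmult_norm_le_sum[of x] by (simp add: norm_unitization_def)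

lemma bounded_linear_uscal: "bounded_linear uscal"
  by (rule bounded_linear_intro[of _ 1])
    (simp_all add: scaleR_unitization_def norm_unitization_def scaleR_conv_of_real)

lemma bounded_linear_uvec: "bounded_linear uvec"
proof (rule bounded_linear_intro[of _ 2])
  show "norm (uvec x) \<le> norm x * 2" for x :: "'a unitization"
    using norm_uvec_le[of x] max.cobounded1[of "cmod (uscal x)" "ulmult_norm x"]
      max.cobounded2[of "cmod (uscal x)" "ulmult_norm x"]
    unfolding norm_unitization_def by linarith
qed (simp_all add: scaleR_unitization_def scaleR_scaleC)

instance unitization :: (cstar_algebra) banach
proof
  fix X :: "nat \<Rightarrow> 'a unitization"
  assume "Cauchy X"
  then obtain l a where l: "(\<lambda>n. uscal (X n)) \<longlonglongrightarrow> l" and a: "(\<lambda>n. uvec (X n)) \<longlonglongrightarrow> a"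
    using bounded_linear.Cauchy[OF bounded_linear_uscal] bounded_linear.Cauchy[OF bounded_linear_uvec]
    by (metis Cauchy_convergent_iff convergent_def)
  have "(\<lambda>n. cmod (uscal (X n) - l) + norm (uvec (X n) - a)) \<longlonglongrightarrow> 0"
    using tendsto_add[OF l[THEN LIM_zero, THEN tendsto_norm_zero] a[THEN LIM_zero, THEN tendsto_norm_zero]]
    by simp
  hence "(\<lambda>n. X n - Unitize l a) \<longlonglongrightarrow> 0"
    by (rule tendsto_0_le[where K = 1]) (simp add: norm_le_uscal_uvec[THEN order_trans])
  thus "convergent X" unfolding convergent_def by (auto dest: LIM_zero_cancel)
qed

instantiation unitization :: (cstar_algebra) cstar_algebra
begin

definition cstar_unitization :: "'a unitization \<Rightarrow> 'a unitization" where
  "cstar_unitization = ustar"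

instance
proof
  fix r :: real and c :: complex and x y :: "'a unitization"
  show "r *\<^sub>R x = complex_of_real r *\<^sub>C x" by (simp add: scaleR_unitization_def)
  show "norm (c *\<^sub>C x) = cmod c * norm x"
    by (simp add: norm_unitization_def ulmult_norm_scaleC norm_mult max_mult_distrib_left)
  show "c *\<^sub>C x * y = c *\<^sub>C (x * y)" "x * c *\<^sub>C y = c *\<^sub>C (x * y)"
    by (rule unitization_eqI;
        simp add: scaleC_add_right mult_scaleC_left mult_scaleC_right scaleC_scaleC algebra_simps)+
  show "cstar (cstar x) = x" by (simp add: cstar_unitization_def ustar_ustar)
  show "cstar (x + y) = cstar x + cstar y" "cstar (c *\<^sub>C x) = cnj c *\<^sub>C cstar x"
    "cstar (x * y) = cstar y * cstar x"
    by (rule unitization_eqI; simp add: cstar_unitization_def ustar_def cstar_add cstar_scaleC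
        cstar_mult add.commute add.left_commute)+
  have "cmod (uscal (cstar x * x)) = cmod (uscal x) ^ 2"
    by (simp add: cstar_unitization_def ustar_def norm_mult complex_mod_cnj power2_eq_square)
  moreover have "ulmult_norm (cstar x * x) = ulmult_norm x ^ 2"
    by (simp add: cstar_unitization_def ulmult_norm_ustar_mult)
  ultimately show "norm (cstar x * x) = norm x ^ 2"
    using ulmult_norm_nonneg[of x] by (simp add: norm_unitization_def max_def power_mono)
qed

end

instance unitization :: (cstar_algebra) cstar_algebra_1 ..

lemma norm_cstar_mult_le_add:
  fixes b c :: "'a::cstar_algebra"
  shows "norm (cstar b * b) \<le> norm (cstar b * b + cstar c * c)"
proof -
  have emb: "cstar (Unitize 0 b) * Unitize 0 b = Unitize 0 (cstar b * b)" for b :: 'a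
    by (rule unitization_eqI) (simp_all add: cstar_unitization_def ustar_def)
  have norm_emb: "norm (Unitize 0 a) = norm a" for a :: 'a
    by (simp add: norm_unitization_def ulmult_norm_Unitize_0)
  have "norm (cstar (Unitize 0 b) * Unitize 0 b)
      \<le> norm (cstar (Unitize 0 b) * Unitize 0 b + cstar (Unitize 0 c) * Unitize 0 c)"
    by (intro norm_le_norm_add_positive positive_cstar_mult)
  also have "cstar (Unitize 0 b) * Unitize 0 b + cstar (Unitize 0 c) * Unitize 0 c
      = Unitize 0 (cstar b * b + cstar c * c)"
    unfolding emb by (rule unitization_eqI) simp_all
  finally show ?thesis unfolding emb norm_emb .
qed


section \<open>Hilbert C*-modules: the Cauchy--Schwarz inequality\<close>

locale hilbert_mod =
  fixes act :: "'a::cstar_algebra \<Rightarrow> 'x::complex_vec \<Rightarrow> 'x" and ip :: "'x \<Rightarrow> 'x \<Rightarrow> 'a"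
  assumes hilbert_module: "hilbert_module act ip"
begin

lemma act_add_right: "act a (x + y) = act a x + act a y"
  and act_add_left: "act (a + b) x = act a x + act b x"
  and act_scaleC_left: "act (c *\<^sub>C a) x = c *\<^sub>C act a x"
  and act_scaleC_right: "act a (c *\<^sub>C x) = c *\<^sub>C act a x"
  and ip_add_left: "ip (x + y) z = ip x z + ip y z"
  and ip_scaleC_left: "ip (c *\<^sub>C x) y = c *\<^sub>C ip x y"
  and ip_act_left: "ip (act a x) y = a * ip x y"
  and cstar_ip: "cstar (ip x y) = ip y x"
  and ip_self_pos: "cstar_pos (ip x x)"
  and ip_self_eq_0_iff: "ip x x = 0 \<longleftrightarrow> x = 0"
  using hilbert_module by (simp_all add: hilbert_module_def)

lemma complete:
  fixes X :: "nat \<Rightarrow> 'x"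
  assumes "\<forall>e>0. \<exists>N. \<forall>m\<ge>N. \<forall>n\<ge>N. hnorm ip (X m - X n) < e"
  shows "\<exists>l. \<forall>e>0. \<exists>N. \<forall>n\<ge>N. hnorm ip (X n - l) < e"
proof -
  have "\<forall>X::nat \<Rightarrow> 'x. (\<forall>e>0. \<exists>N. \<forall>m\<ge>N. \<forall>n\<ge>N. hnorm ip (X m - X n) < e) \<longrightarrow>
      (\<exists>l. \<forall>e>0. \<exists>N. \<forall>n\<ge>N. hnorm ip (X n - l) < e)"
    using hilbert_module unfolding hilbert_module_def by (elim conjE) assumption
  thus ?thesis using assms by blast
qed

lemma act_diff_right: "act a (x - y) = act a x - act a y"
  using act_add_right[of a "x - y" y] by (simp add: eq_diff_eq)

lemma act_diff_left: "act (a - b) x = act a x - act b x"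
  using act_add_left[of "a - b" b x] by (simp add: eq_diff_eq)

lemma ip_zero_left: "ip 0 y = 0"
  using ip_add_left[of 0 0 y] by simp

lemma ip_diff_left: "ip (x - y) z = ip x z - ip y z"
  using ip_add_left[of "x - y" y z] by (simp add: eq_diff_eq)

lemma ip_add_right: "ip x (y + z) = ip x y + ip x z"
  by (metis cstar_ip ip_add_left cstar_add)

lemma ip_diff_right: "ip x (y - z) = ip x y - ip x z"
  by (metis cstar_ip ip_diff_left cstar_diff)

lemma ip_zero_right: "ip x 0 = 0"
  by (metis cstar_ip ip_zero_left cstar_zero)

lemma ip_scaleC_right: "ip x (c *\<^sub>C y) = cnj c *\<^sub>C ip x y"
  by (metis cstar_ip ip_scaleC_left cstar_scaleC)

lemma ip_act_right: "ip x (act a y) = ip x y * cstar a"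
  by (metis cstar_ip ip_act_left cstar_mult)

lemma ip_act_act: "ip (act a x) (act a x) = a * ip x x * cstar a"
  by (simp add: ip_act_left ip_act_right mult.assoc)

lemma act_ip_scaleC:
  "act (ip (k *\<^sub>C u) (k *\<^sub>C v)) (k *\<^sub>C w) = (k * cnj k * k) *\<^sub>C act (ip u v) w"
  by (simp add: ip_scaleC_left ip_scaleC_right scaleC_scaleC act_scaleC_left act_scaleC_right
      mult.commute mult.left_commute)

abbreviation hn where "hn \<equiv> hnorm ip"

lemma hn_nonneg: "hn x \<ge> 0"
  by (simp add: hnorm_def)

lemma hn_square: "hn x ^ 2 = norm (ip x x)"
  by (simp add: hnorm_def)

lemma hn_eq_0_iff: "hn x = 0 \<longleftrightarrow> x = 0"
  by (simp add: hnorm_def ip_self_eq_0_iff)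

lemma hn_zero [simp]: "hn 0 = 0"
  by (simp add: hn_eq_0_iff)

lemma hn_scaleC: "hn (c *\<^sub>C x) = cmod c * hn x"
proof -
  have "ip (c *\<^sub>C x) (c *\<^sub>C x) = (c * cnj c) *\<^sub>C ip x x"
    by (simp add: ip_scaleC_left ip_scaleC_right scaleC_scaleC mult.commute)
  hence "norm (ip (c *\<^sub>C x) (c *\<^sub>C x)) = (cmod c)\<^sup>2 * norm (ip x x)"
    by (simp add: norm_scaleC norm_mult power2_eq_square)
  thus ?thesis by (simp add: hnorm_def real_sqrt_mult)
qed

lemma hn_minus_commute: "hn (x - y) = hn (y - x)"
  using hn_scaleC[of "-1" "x - y"] by (simp add: scaleC_minus_left scaleC_one)

lemma norm_ip_le_quadratic:
  assumes "t > 0"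
  shows "2 * t * norm (ip x y) ^ 2 \<le> norm (ip x x) + t\<^sup>2 * (norm (ip x y) ^ 2 * norm (ip y y))"
proof -
  \<comment> \<open>\<open>\<langle>z, z\<rangle> + 2t \<langle>x, y\<rangle> \<langle>y, x\<rangle> = \<langle>x, x\<rangle> + t\<^sup>2 \<langle>x, y\<rangle> \<langle>y, y\<rangle> \<langle>y, x\<rangle>\<close> for
    \<open>z = x - t \<langle>x, y\<rangle> y\<close>, and both summands on the left have the form \<open>b\<^sup>* b\<close>.\<close>
  define a where "a = ip x y"
  define w where "w = act a y"
  define z where "z = x - complex_of_real t *\<^sub>C w"
  have wx: "ip w x = a * cstar a" by (simp add: w_def ip_act_left a_def cstar_ip)
  have xw: "ip x w = a * cstar a" by (simp add: w_def ip_act_right a_def)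
  have ww: "ip w w = a * ip y y * cstar a" by (simp add: w_def ip_act_act)
  have "ip z z = ip x x - complex_of_real t *\<^sub>C ip x w - complex_of_real t *\<^sub>C ip w x
      + (complex_of_real t * complex_of_real t) *\<^sub>C ip w w"
    by (simp add: z_def ip_diff_left ip_diff_right ip_scaleC_left ip_scaleC_right scaleC_diff_right
        scaleC_scaleC algebra_simps)
  also have "\<dots> = ip x x - (2 * t) *\<^sub>R (a * cstar a) + t\<^sup>2 *\<^sub>R (a * ip y y * cstar a)"
    by (simp add: xw wx ww scaleR_scaleC scaleC_add_left[symmetric] algebra_simps power2_eq_square)
  finally have "ip z z = ip x x - (2 * t) *\<^sub>R (a * cstar a) + t\<^sup>2 *\<^sub>R (a * ip y y * cstar a)" .
  moreover obtain b where "ip z z = cstar b * b" using ip_self_pos[of z] by (auto simp: cstar_pos_def)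
  moreover define b' where "b' = sqrt (2 * t) *\<^sub>R cstar a"
  have b': "cstar b' * b' = (2 * t) *\<^sub>R (a * cstar a)"
    using assms by (simp add: b'_def cstar_scaleR cstar_cstar)
  ultimately have "cstar b' * b' + cstar b * b = ip x x + t\<^sup>2 *\<^sub>R (a * ip y y * cstar a)"
    by simp
  hence "norm (cstar b' * b') \<le> norm (ip x x + t\<^sup>2 *\<^sub>R (a * ip y y * cstar a))"
    using norm_cstar_mult_le_add[of b' b] by simp
  also have "\<dots> \<le> norm (ip x x) + t\<^sup>2 * (norm a * norm (ip y y) * norm a)"
    by (intro order_trans[OF norm_triangle_ineq] add_mono order_refl)
      (simp add: mult_left_mono norm_mult_ineq[THEN order_trans] mult_right_mono)
  finally show ?thesis
    using assms by (simp add: b' norm_mult_cstar a_def power2_eq_square mult_ac)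
qed

lemma norm_ip_le: "norm (ip x y) \<le> hn x * hn y"
proof (cases "y = 0")
  case False
  define Y where "Y = norm (ip y y)"
  have Y: "Y > 0" using False by (simp add: Y_def ip_self_eq_0_iff)
  have "2 * (1 / Y) * norm (ip x y) ^ 2 \<le> norm (ip x x) + (1 / Y)\<^sup>2 * (norm (ip x y) ^ 2 * Y)"
    using norm_ip_le_quadratic[of "1 / Y" x y] Y by (simp add: Y_def)
  hence "norm (ip x y) ^ 2 \<le> norm (ip x x) * Y"
    using Y by (simp add: field_simps power2_eq_square)
  hence "norm (ip x y) \<le> sqrt (norm (ip x x) * Y)" by (simp add: real_le_rsqrt)
  thus ?thesis by (simp add: Y_def hnorm_def real_sqrt_mult)
qed (simp add: ip_zero_right hn_nonneg)

lemma hn_triangle: "hn (x + y) \<le> hn x + hn y"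
proof -
  have "hn (x + y) ^ 2 = norm (ip x x + ip x y + (ip y x + ip y y))"
    by (simp add: hn_square ip_add_left ip_add_right add_ac)
  also have "\<dots> \<le> norm (ip x x) + norm (ip x y) + (norm (ip y x) + norm (ip y y))"
    by (intro norm_triangle_le add_mono norm_triangle_ineq)
  also have "norm (ip y x) = norm (ip x y)" by (metis cstar_ip norm_cstar)
  also have "norm (ip x x) + norm (ip x y) + (norm (ip x y) + norm (ip y y)) \<le> (hn x + hn y) ^ 2"
    using norm_ip_le[of x y] unfolding power2_sum hn_square by linarith
  finally show ?thesis by (rule power2_le_imp_le) (simp add: hn_nonneg)
qed

lemma hn_triangle_diff: "hn (x - z) \<le> hn (x - y) + hn (y - z)"
  using hn_triangle[of "x - y" "y - z"] by simp

lemma hn_add4_le: "hn (a + b + c + d) \<le> hn a + hn b + hn c + hn d"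
  using hn_triangle[of "a + b + c" d] hn_triangle[of "a + b" c] hn_triangle[of a b] by linarith

lemma hn_act_le: "hn (act a x) \<le> norm a * hn x"
proof -
  have "norm (ip (act a x) (act a x)) \<le> norm a * norm (ip x x) * norm a"
    unfolding ip_act_act
    by (metis mult_right_mono norm_cstar norm_ge_zero order_trans norm_mult_ineq)
  hence "hn (act a x) ^ 2 \<le> (norm a * hn x) ^ 2"
    unfolding power_mult_distrib hn_square by (simp add: power2_eq_square mult_ac)
  thus ?thesis by (rule power2_le_imp_le) (simp add: hn_nonneg)
qed

lemma hn_act_ip_diff_le:
  "hn (act (ip x y) z - act (ip x' y') z')
    \<le> (hn (x - x') * hn y + hn x' * hn (y - y')) * hn z + norm (ip x' y') * hn (z - z')"
proof -
  have "ip x y - ip x' y' = ip (x - x') y + ip x' (y - y')"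
    by (simp add: ip_diff_left ip_diff_right)
  hence "norm (ip x y - ip x' y') \<le> hn (x - x') * hn y + hn x' * hn (y - y')"
    using norm_triangle_ineq[of "ip (x - x') y" "ip x' (y - y')"]
      norm_ip_le[of "x - x'" y] norm_ip_le[of x' "y - y'"] by simp
  have "act (ip x y) z - act (ip x' y') z'
      = act (ip x y - ip x' y') z + act (ip x' y') (z - z')"
    by (simp add: act_diff_left act_diff_right)
  hence "hn (act (ip x y) z - act (ip x' y') z')
      \<le> norm (ip x y - ip x' y') * hn z + norm (ip x' y') * hn (z - z')"
    by (simp only:) (rule order_trans[OF hn_triangle add_mono[OF hn_act_le hn_act_le]])
  moreover have "norm (ip x y - ip x' y') * hn z
      \<le> (hn (x - x') * hn y + hn x' * hn (y - y')) * hn z"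
    by (rule mult_right_mono[OF \<open>norm (ip x y - ip x' y') \<le> _\<close> hn_nonneg])
  ultimately show ?thesis by linarith
qed

lemma hn_tendsto:
  assumes "(\<lambda>n. hn (u n - v)) \<longlonglongrightarrow> 0"
  shows "(\<lambda>n. hn (u n)) \<longlonglongrightarrow> hn v"
proof -
  have "\<bar>hn (u n) - hn v\<bar> \<le> hn (u n - v)" for n
    using hn_triangle_diff[of "u n" 0 v] hn_triangle_diff[of v 0 "u n"] hn_minus_commute[of v "u n"]
    by simp
  hence "(\<lambda>n. hn (u n) - hn v) \<longlonglongrightarrow> 0"
    by (intro tendsto_0_le[OF assms, of _ 1]) (simp add: hn_nonneg)
  thus ?thesis by (rule LIM_zero_cancel)
qed

lemma eq_0_if_hn_le_tendsto_0:
  assumes "\<And>n. hn v \<le> t n" "t \<longlonglongrightarrow> 0"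
  shows "v = 0"
proof -
  have "hn v \<le> 0" by (rule tendsto_lowerbound[OF assms(2)]) (simp_all add: assms(1))
  thus ?thesis using hn_nonneg[of v] by (simp add: hn_eq_0_iff)
qed

end


section \<open>Hyers' direct method\<close>

lemma sum_of_unimodularE:
  assumes "cmod w \<le> 2"
  obtains a b where "cmod a = 1" "cmod b = 1" "w = a + b"
proof -
  \<comment> \<open>\<open>w = r u\<close> with \<open>|u| = 1\<close>, and \<open>r = (r/2 + i s) + (r/2 - i s)\<close> with \<open>(r/2)\<^sup>2 + s\<^sup>2 = 1\<close>.\<close>
  define r where "r = cmod w"
  define u where "u = (if w = 0 then 1 else w / complex_of_real r)"
  have u: "cmod u = 1" "w = complex_of_real r * u" by (simp_all add: u_def r_def norm_divide)
  define s where "s = sqrt (1 - r\<^sup>2 / 4)"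
  have "r * r \<le> 2 * 2" using assms r_def by (intro mult_mono) simp_all
  hence "s\<^sup>2 = 1 - r\<^sup>2 / 4" by (simp add: s_def power2_eq_square)
  hence "cmod (Complex (r/2) s) = 1" "cmod (Complex (r/2) (- s)) = 1"
    by (simp_all add: cmod_def power_divide)
  moreover have "w = u * Complex (r/2) s + u * Complex (r/2) (- s)"
    by (simp add: u(2) distrib_left[symmetric] complex_eq_iff mult.commute)
  ultimately show ?thesis
    using u(1) by (intro that[of "u * Complex (r/2) s" "u * Complex (r/2) (- s)"]) (simp_all add: norm_mult)
qed

locale approx_hilbert_hom = X: hilbert_mod actA ipX + Y: hilbert_mod actB ipY
  for actA :: "'a::cstar_algebra \<Rightarrow> 'x::complex_vec \<Rightarrow> 'x" and ipX
    and actB :: "'b::cstar_algebra \<Rightarrow> 'y::complex_vec \<Rightarrow> 'y" and ipY +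
  fixes f :: "'x \<Rightarrow> 'y" and \<phi> :: "'x \<Rightarrow> 'x \<Rightarrow> 'x \<Rightarrow> real" and L :: real
  assumes phi_nonneg: "\<forall>x y z. \<phi> x y z \<ge> 0"
    and approx_add: "\<forall>\<mu> x y. cmod \<mu> = 1 \<longrightarrow>
      hnorm ipY (f (\<mu> *\<^sub>C x + y) - \<mu> *\<^sub>C f x - f y) \<le> \<phi> x y 0"
    and approx_hom:
      "\<forall>x y z. hnorm ipY (f (actA (ipX x y) z) - actB (ipY (f x) (f y)) (f z)) \<le> \<phi> x y z"
    and L_nonneg: "0 \<le> L" and L_less_1: "L < 1"
    and phi_half: "\<forall>x y z. \<phi> x y z \<le> 2 * L * \<phi> ((1/2) *\<^sub>C x) ((1/2) *\<^sub>C y) ((1/2) *\<^sub>C z)"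
begin

lemma phi_scale_pow:
  "\<phi> ((2::complex) ^ n *\<^sub>C x) (2 ^ n *\<^sub>C y) (2 ^ n *\<^sub>C z) \<le> (2 * L) ^ n * \<phi> x y z"
proof (induction n)
  case (Suc n)
  have half: "(1/2::complex) *\<^sub>C (2 ^ Suc n *\<^sub>C v) = 2 ^ n *\<^sub>C v" for v :: 'x
    by (simp add: scaleC_scaleC)
  have "\<phi> (2 ^ Suc n *\<^sub>C x) (2 ^ Suc n *\<^sub>C y) (2 ^ Suc n *\<^sub>C z)
      \<le> 2 * L * \<phi> (2 ^ n *\<^sub>C x) (2 ^ n *\<^sub>C y) (2 ^ n *\<^sub>C z)"
    using phi_half[rule_format, of "2 ^ Suc n *\<^sub>C x" "2 ^ Suc n *\<^sub>C y" "2 ^ Suc n *\<^sub>C z"]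
    by (simp only: half)
  also have "\<dots> \<le> 2 * L * ((2 * L) ^ n * \<phi> x y z)" using Suc L_nonneg by (simp add: mult_left_mono)
  finally show ?case by simp
qed (simp add: scaleC_one)

definition hyers_seq :: "nat \<Rightarrow> 'x \<Rightarrow> 'y" where
  "hyers_seq n x = ((1/2::complex) ^ n) *\<^sub>C f ((2::complex) ^ n *\<^sub>C x)"

lemma hn_half_pow_scaleC_le:
  assumes "Y.hn v \<le> (2 * L) ^ n * c"
  shows "Y.hn ((1/2::complex) ^ n *\<^sub>C v) \<le> L ^ n * c"
proof -
  have "Y.hn ((1/2::complex) ^ n *\<^sub>C v) = (1/2) ^ n * Y.hn v"
    by (simp add: Y.hn_scaleC norm_power)
  also have "\<dots> \<le> (1/2) ^ n * ((2 * L) ^ n * c)" by (rule mult_left_mono[OF assms]) simp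
  also have "\<dots> = L ^ n * c" by (simp add: power_mult_distrib field_simps)
  finally show ?thesis .
qed

lemma hn_hyers_seq_Suc_le: "Y.hn (hyers_seq (Suc n) x - hyers_seq n x) \<le> L ^ n * (\<phi> x x 0 / 2)"
proof -
  define x' where "x' = (2::complex) ^ n *\<^sub>C x"
  have "Y.hn (f (x' + x') - f x' - f x') \<le> (2 * L) ^ n * \<phi> x x 0"
    using approx_add[rule_format, of 1 x' x'] phi_scale_pow[of n x x 0] by (simp add: x'_def scaleC_one)
  hence "Y.hn ((1/2::complex) *\<^sub>C (f (x' + x') - f x' - f x')) \<le> (2 * L) ^ n * (\<phi> x x 0 / 2)"
    by (simp add: Y.hn_scaleC)
  hence "Y.hn ((1/2::complex) ^ n *\<^sub>C (1/2::complex) *\<^sub>C (f (x' + x') - f x' - f x'))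
      \<le> L ^ n * (\<phi> x x 0 / 2)"
    by (rule hn_half_pow_scaleC_le)
  moreover have "(1/2::complex) *\<^sub>C (v - w - w) = (1/2::complex) *\<^sub>C v - w" for v w :: 'y
    by (simp add: scaleC_diff_right diff_diff_eq scaleC_two[symmetric] scaleC_scaleC scaleC_one)
  moreover have "x' + x' = (2::complex) ^ Suc n *\<^sub>C x"
    by (simp add: x'_def scaleC_two[symmetric] scaleC_scaleC)
  hence "(1/2::complex) ^ n *\<^sub>C ((1/2::complex) *\<^sub>C f (x' + x') - f x')
      = hyers_seq (Suc n) x - hyers_seq n x"
    by (simp add: hyers_seq_def x'_def scaleC_diff_right scaleC_scaleC)
  ultimately show ?thesis by simp
qed

lemma hn_hyers_seq_diff_le:
  assumes "m \<le> n"
  shows "Y.hn (hyers_seq n x - hyers_seq m x) \<le> L ^ m / (1 - L) * (\<phi> x x 0 / 2)"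
proof -
  have tele: "Y.hn (hyers_seq (m + d) x - hyers_seq m x)
      \<le> (L ^ m - L ^ (m + d)) / (1 - L) * (\<phi> x x 0 / 2)" for d
  proof (induction d)
    case (Suc d)
    have "Y.hn (hyers_seq (m + Suc d) x - hyers_seq m x)
        \<le> Y.hn (hyers_seq (Suc (m + d)) x - hyers_seq (m + d) x)
          + Y.hn (hyers_seq (m + d) x - hyers_seq m x)"
      using Y.hn_triangle_diff by simp
    also have "\<dots> \<le> L ^ (m + d) * (\<phi> x x 0 / 2) + (L ^ m - L ^ (m + d)) / (1 - L) * (\<phi> x x 0 / 2)"
      using Suc hn_hyers_seq_Suc_le by (rule add_mono[rotated])
    also have "\<dots> = (L ^ m - L ^ (m + Suc d)) / (1 - L) * (\<phi> x x 0 / 2)"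
      using L_less_1 by (simp add: field_simps)
    finally show ?case .
  qed simp
  obtain d where n: "n = m + d" using assms le_Suc_ex by blast
  have "(L ^ m - L ^ (m + d)) / (1 - L) * (\<phi> x x 0 / 2) \<le> L ^ m / (1 - L) * (\<phi> x x 0 / 2)"
    using L_nonneg L_less_1 phi_nonneg by (intro mult_right_mono divide_right_mono) simp_all
  thus ?thesis unfolding n by (rule order_trans[OF tele])
qed

lemma hyers_seq_Cauchy: "\<forall>e>0. \<exists>N. \<forall>m\<ge>N. \<forall>n\<ge>N. Y.hn (hyers_seq m x - hyers_seq n x) < e"
proof (intro allI impI)
  fix e :: real assume "e > 0"
  have "(\<lambda>m. L ^ m / (1 - L) * (\<phi> x x 0 / 2)) \<longlonglongrightarrow> 0 / (1 - L) * (\<phi> x x 0 / 2)"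
    using L_nonneg L_less_1 by (intro tendsto_intros LIMSEQ_power_zero) simp_all
  hence "eventually (\<lambda>m. L ^ m / (1 - L) * (\<phi> x x 0 / 2) < e) sequentially"
    using \<open>e > 0\<close> by (intro order_tendstoD) simp_all
  then obtain N where N: "\<And>m. m \<ge> N \<Longrightarrow> L ^ m / (1 - L) * (\<phi> x x 0 / 2) < e"
    by (auto simp: eventually_sequentially)
  have "Y.hn (hyers_seq m x - hyers_seq n x) < e" if "m \<ge> N" "n \<ge> N" for m n
  proof (cases "m \<le> n")
    case True
    thus ?thesis using hn_hyers_seq_diff_le[OF True, of x] N[OF that(1)]
        Y.hn_minus_commute[of "hyers_seq m x" "hyers_seq n x"] by linarith
  next
    case False
    thus ?thesis using hn_hyers_seq_diff_le[of n m x] N[OF that(2)] by linarith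
  qed
  thus "\<exists>N. \<forall>m\<ge>N. \<forall>n\<ge>N. Y.hn (hyers_seq m x - hyers_seq n x) < e" by blast
qed

definition hyers_lim :: "'x \<Rightarrow> 'y" where
  "hyers_lim x = (SOME l. \<forall>e>0. \<exists>N. \<forall>n\<ge>N. Y.hn (hyers_seq n x - l) < e)"

lemma hyers_seq_tendsto: "(\<lambda>n. Y.hn (hyers_seq n x - hyers_lim x)) \<longlonglongrightarrow> 0"
proof -
  have "\<exists>l. \<forall>e>0. \<exists>N. \<forall>n\<ge>N. Y.hn (hyers_seq n x - l) < e"
    by (rule Y.complete[OF hyers_seq_Cauchy])
  hence "\<forall>e>0. \<exists>N. \<forall>n\<ge>N. Y.hn (hyers_seq n x - hyers_lim x) < e"
    unfolding hyers_lim_def by (rule someI_ex)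
  thus ?thesis by (simp add: LIMSEQ_iff Y.hn_nonneg)
qed

lemma hn_f_minus_hyers_lim_le: "Y.hn (f x - hyers_lim x) \<le> 1 / (2 - 2 * L) * \<phi> x x 0"
proof (rule tendsto_lowerbound)
  show "(\<lambda>n. 1 / (2 - 2 * L) * \<phi> x x 0 + Y.hn (hyers_seq n x - hyers_lim x))
      \<longlonglongrightarrow> 1 / (2 - 2 * L) * \<phi> x x 0"
    using tendsto_add[OF tendsto_const hyers_seq_tendsto] by simp
  have "Y.hn (f x - hyers_lim x) \<le> 1 / (2 - 2 * L) * \<phi> x x 0 + Y.hn (hyers_seq n x - hyers_lim x)"
    for n
  proof -
    have "Y.hn (f x - hyers_lim x)
        \<le> Y.hn (hyers_seq n x - hyers_seq 0 x) + Y.hn (hyers_seq n x - hyers_lim x)"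
      using Y.hn_triangle_diff[of "f x" "hyers_lim x" "hyers_seq n x"]
        Y.hn_minus_commute[of "f x" "hyers_seq n x"]
      by (simp add: hyers_seq_def scaleC_one)
    moreover have "Y.hn (hyers_seq n x - hyers_seq 0 x) \<le> 1 / (2 - 2 * L) * \<phi> x x 0"
      using hn_hyers_seq_diff_le[of 0 n x] L_less_1 by (simp add: field_simps)
    ultimately show ?thesis by linarith
  qed
  thus "\<forall>\<^sub>F n in sequentially.
      Y.hn (f x - hyers_lim x) \<le> 1 / (2 - 2 * L) * \<phi> x x 0 + Y.hn (hyers_seq n x - hyers_lim x)"
    by simp
qed simp

lemma hn_hyers_seq_add_scaleC_le:
  assumes "cmod \<mu> = 1"
  shows "Y.hn (hyers_seq n (\<mu> *\<^sub>C x + y) - \<mu> *\<^sub>C hyers_seq n x - hyers_seq n y)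
    \<le> L ^ n * \<phi> x y 0"
proof -
  define x' where "x' = (2::complex) ^ n *\<^sub>C x"
  define y' where "y' = (2::complex) ^ n *\<^sub>C y"
  have "Y.hn (f (\<mu> *\<^sub>C x' + y') - \<mu> *\<^sub>C f x' - f y') \<le> (2 * L) ^ n * \<phi> x y 0"
    using approx_add[rule_format, OF assms, of x' y'] phi_scale_pow[of n x y 0]
    by (simp add: x'_def y'_def)
  hence "Y.hn ((1/2::complex) ^ n *\<^sub>C (f (\<mu> *\<^sub>C x' + y') - \<mu> *\<^sub>C f x' - f y')) \<le> L ^ n * \<phi> x y 0"
    by (rule hn_half_pow_scaleC_le)
  thus ?thesis
    by (simp add: hyers_seq_def x'_def y'_def scaleC_add_right scaleC_diff_right scaleC_scaleC
        mult.commute)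
qed

lemma hyers_lim_add_scaleC:
  assumes "cmod \<mu> = 1"
  shows "hyers_lim (\<mu> *\<^sub>C x + y) = \<mu> *\<^sub>C hyers_lim x + hyers_lim y"
proof -
  let ?g = hyers_seq and ?H = hyers_lim
  have "?H (\<mu> *\<^sub>C x + y) - \<mu> *\<^sub>C ?H x - ?H y = 0"
  proof (rule Y.eq_0_if_hn_le_tendsto_0)
    fix n
    have "?H (\<mu> *\<^sub>C x + y) - \<mu> *\<^sub>C ?H x - ?H y
        = (?H (\<mu> *\<^sub>C x + y) - ?g n (\<mu> *\<^sub>C x + y)) + (?g n (\<mu> *\<^sub>C x + y) - \<mu> *\<^sub>C ?g n x - ?g n y)
          + \<mu> *\<^sub>C (?g n x - ?H x) + (?g n y - ?H y)"
      by (simp add: algebra_simps scaleC_diff_right)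
    thus "Y.hn (?H (\<mu> *\<^sub>C x + y) - \<mu> *\<^sub>C ?H x - ?H y)
        \<le> Y.hn (?g n (\<mu> *\<^sub>C x + y) - ?H (\<mu> *\<^sub>C x + y)) + L ^ n * \<phi> x y 0
          + Y.hn (?g n x - ?H x) + Y.hn (?g n y - ?H y)"
      using Y.hn_add4_le[of "?H (\<mu> *\<^sub>C x + y) - ?g n (\<mu> *\<^sub>C x + y)"
          "?g n (\<mu> *\<^sub>C x + y) - \<mu> *\<^sub>C ?g n x - ?g n y" "\<mu> *\<^sub>C (?g n x - ?H x)" "?g n y - ?H y"]
        hn_hyers_seq_add_scaleC_le[OF assms, of n x y] Y.hn_minus_commute[of "?H (\<mu> *\<^sub>C x + y)" "?g n (\<mu> *\<^sub>C x + y)"]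
        Y.hn_scaleC[of \<mu> "?g n x - ?H x"] assms
      by (simp only:)
  next
    show "(\<lambda>n. Y.hn (?g n (\<mu> *\<^sub>C x + y) - ?H (\<mu> *\<^sub>C x + y)) + L ^ n * \<phi> x y 0
        + Y.hn (?g n x - ?H x) + Y.hn (?g n y - ?H y)) \<longlonglongrightarrow> 0"
      using L_nonneg L_less_1
      by (intro tendsto_add_zero tendsto_mult_left_zero hyers_seq_tendsto LIMSEQ_power_zero) simp
  qed
  thus ?thesis by (simp add: algebra_simps)
qed

lemma hyers_lim_add: "hyers_lim (x + y) = hyers_lim x + hyers_lim y"
  using hyers_lim_add_scaleC[of 1 x y] by (simp add: scaleC_one)

lemma hyers_lim_scaleC_unimodular: "cmod \<mu> = 1 \<Longrightarrow> hyers_lim (\<mu> *\<^sub>C x) = \<mu> *\<^sub>C hyers_lim x"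
  using hyers_lim_add_scaleC[of \<mu> x 0] hyers_lim_add[of 0 0] by simp

lemma hyers_lim_of_nat_scaleC: "hyers_lim (of_nat k *\<^sub>C x) = of_nat k *\<^sub>C hyers_lim x"
proof (induction k)
  case 0 thus ?case using hyers_lim_add[of 0 0] by simp
next
  case (Suc k) thus ?case by (simp add: scaleC_add_left scaleC_one hyers_lim_add)
qed

lemma hyers_lim_scaleC: "hyers_lim (c *\<^sub>C x) = c *\<^sub>C hyers_lim x"
proof -
  \<comment> \<open>Write \<open>c = M (a + b)\<close> with \<open>M\<close> a positive integer and \<open>|a| = |b| = 1\<close>.\<close>
  define M where "M = Suc (nat \<lceil>cmod c\<rceil>)"
  have M: "real M > 0" "cmod c \<le> real M" unfolding M_def by linarith+
  hence "cmod (c / of_nat M) \<le> 2" by (simp add: norm_divide divide_le_eq)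
  then obtain a b where ab: "cmod a = 1" "cmod b = 1" "c / of_nat M = a + b"
    by (rule sum_of_unimodularE)
  have c: "c = of_nat M * (a + b)" using ab(3) M(1) by (simp add: field_simps)
  have "hyers_lim (c *\<^sub>C x) = hyers_lim (of_nat M *\<^sub>C (a *\<^sub>C x + b *\<^sub>C x))"
    by (simp add: c scaleC_scaleC scaleC_add_right scaleC_add_left distrib_left)
  also have "\<dots> = of_nat M *\<^sub>C (a *\<^sub>C hyers_lim x + b *\<^sub>C hyers_lim x)"
    by (simp add: hyers_lim_of_nat_scaleC hyers_lim_add hyers_lim_scaleC_unimodular ab)
  also have "\<dots> = c *\<^sub>C hyers_lim x"
    by (simp add: c scaleC_scaleC scaleC_add_right scaleC_add_left distrib_left)
  finally show ?thesis .
qed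

text \<open>Since \<open>\<langle>2\<^sup>n x, 2\<^sup>n y\<rangle> 2\<^sup>n z = 8\<^sup>n \<langle>x, y\<rangle> z\<close>, the module operation is compared with the
  sequence at index \<open>3n\<close>.\<close>

lemma hn_hyers_seq_hom_le:
  "Y.hn (hyers_seq (3 * n) (actA (ipX x y) z) - actB (ipY (hyers_seq n x) (hyers_seq n y)) (hyers_seq n z))
    \<le> (L / 4) ^ n * \<phi> x y z"
proof -
  define c where "c = (2::complex) ^ n"
  have "Y.hn (f (actA (ipX (c *\<^sub>C x) (c *\<^sub>C y)) (c *\<^sub>C z))
      - actB (ipY (f (c *\<^sub>C x)) (f (c *\<^sub>C y))) (f (c *\<^sub>C z))) \<le> (2 * L) ^ n * \<phi> x y z"
    using approx_hom[rule_format, of "c *\<^sub>C x" "c *\<^sub>C y" "c *\<^sub>C z"] phi_scale_pow[of n x y z]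
    by (simp add: c_def)
  hence "(1/8) ^ n * Y.hn (f (actA (ipX (c *\<^sub>C x) (c *\<^sub>C y)) (c *\<^sub>C z))
      - actB (ipY (f (c *\<^sub>C x)) (f (c *\<^sub>C y))) (f (c *\<^sub>C z))) \<le> (1/8) ^ n * ((2 * L) ^ n * \<phi> x y z)"
    by (rule mult_left_mono) simp
  also have "\<dots> = (1/8 * (2 * L)) ^ n * \<phi> x y z" by (simp only: power_mult_distrib mult.assoc)
  finally have "Y.hn ((1/8::complex) ^ n *\<^sub>C (f (actA (ipX (c *\<^sub>C x) (c *\<^sub>C y)) (c *\<^sub>C z))
      - actB (ipY (f (c *\<^sub>C x)) (f (c *\<^sub>C y))) (f (c *\<^sub>C z)))) \<le> (L / 4) ^ n * \<phi> x y z"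
    by (simp add: Y.hn_scaleC norm_power)
  moreover have "actA (ipX (c *\<^sub>C x) (c *\<^sub>C y)) (c *\<^sub>C z) = (2::complex) ^ (3 * n) *\<^sub>C actA (ipX x y) z"
    by (simp add: X.act_ip_scaleC c_def power_mult power3_eq_cube mult.commute)
  moreover have "actB (ipY (hyers_seq n x) (hyers_seq n y)) (hyers_seq n z)
      = (1/8::complex) ^ n *\<^sub>C actB (ipY (f (c *\<^sub>C x)) (f (c *\<^sub>C y))) (f (c *\<^sub>C z))"
    by (simp add: hyers_seq_def c_def Y.act_ip_scaleC power_mult_distrib[symmetric])
  moreover have "(1/2::complex) ^ (3 * n) = (1/8) ^ n" by (simp add: power_mult power3_eq_cube)
  ultimately show ?thesis by (simp add: hyers_seq_def scaleC_diff_right)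
qed

lemma hyers_lim_hom:
  "hyers_lim (actA (ipX x y) z) = actB (ipY (hyers_lim x) (hyers_lim y)) (hyers_lim z)"
proof -
  let ?g = hyers_seq and ?H = hyers_lim
  define w where "w = actA (ipX x y) z"
  define A where "A n = actB (ipY (?g n x) (?g n y)) (?g n z)" for n
  define d where "d v n = Y.hn (?g n v - ?H v)" for v n
  define t where "t n = d w (3 * n) + (L / 4) ^ n * \<phi> x y z
    + ((d x n * Y.hn (?g n y) + Y.hn (?H x) * d y n) * Y.hn (?g n z)
       + norm (ipY (?H x) (?H y)) * d z n)" for n
  have "?H w - actB (ipY (?H x) (?H y)) (?H z) = 0"
  proof (rule Y.eq_0_if_hn_le_tendsto_0)
    fix n
    have "Y.hn (?H w - actB (ipY (?H x) (?H y)) (?H z))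
        \<le> Y.hn (?H w - ?g (3 * n) w) + Y.hn (?g (3 * n) w - A n)
          + Y.hn (A n - actB (ipY (?H x) (?H y)) (?H z))"
      using Y.hn_triangle_diff[of "?H w" "actB (ipY (?H x) (?H y)) (?H z)" "?g (3 * n) w"]
        Y.hn_triangle_diff[of "?g (3 * n) w" "actB (ipY (?H x) (?H y)) (?H z)" "A n"]
      by linarith
    also have "\<dots> \<le> t n"
      unfolding t_def d_def A_def
      using hn_hyers_seq_hom_le[of n x y z, folded w_def] Y.hn_minus_commute[of "?H w" "?g (3 * n) w"]
        Y.hn_act_ip_diff_le[of "?g n x" "?g n y" "?g n z" "?H x" "?H y" "?H z"]
      by linarith
    finally show "Y.hn (?H w - actB (ipY (?H x) (?H y)) (?H z)) \<le> t n" .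
  next
    have "(\<lambda>n. d w (3 * n)) \<longlonglongrightarrow> 0"
      using LIMSEQ_subseq_LIMSEQ[OF hyers_seq_tendsto, of "\<lambda>n. 3 * n"]
      by (simp add: d_def strict_mono_def o_def)
    moreover have "(\<lambda>n. Y.hn (?g n v)) \<longlonglongrightarrow> Y.hn (?H v)" for v
      by (rule Y.hn_tendsto[OF hyers_seq_tendsto])
    moreover have "d v \<longlonglongrightarrow> 0" for v unfolding d_def by (rule hyers_seq_tendsto)
    ultimately have "t \<longlonglongrightarrow> 0 + 0 * \<phi> x y z
        + ((0 * Y.hn (?H y) + Y.hn (?H x) * 0) * Y.hn (?H z) + norm (ipY (?H x) (?H y)) * 0)"
      unfolding t_def using L_nonneg L_less_1 by (intro tendsto_intros LIMSEQ_power_zero) simp_all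
    thus "t \<longlonglongrightarrow> 0" by simp
  qed
  thus ?thesis by (simp add: w_def)
qed

lemma hilbert_module_hom_hyers_lim: "hilbert_module_hom actA ipX actB ipY hyers_lim"
  unfolding hilbert_module_hom_def using hyers_lim_add hyers_lim_scaleC hyers_lim_hom by blast

lemma hyers_lim_unique:
  assumes hom: "hilbert_module_hom actA ipX actB ipY H"
    and bound: "\<forall>x. hnorm ipY (f x - H x) \<le> 1 / (2 - 2 * L) * \<phi> x x 0"
  shows "H = hyers_lim"
proof
  fix x
  \<comment> \<open>Both maps are \<open>\<complex>\<close>-linear, so their distance at \<open>x\<close> is \<open>2\<^sup>-\<^sup>n\<close> times that at \<open>2\<^sup>n x\<close>.\<close>
  define K where "K = 1 / (2 - 2 * L)"
  have K: "K > 0" using L_less_1 by (simp add: K_def)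
  have H_scaleC: "H (c *\<^sub>C v) = c *\<^sub>C H v" for c v using hom by (simp add: hilbert_module_hom_def)
  have "hyers_lim x - H x = 0"
  proof (rule Y.eq_0_if_hn_le_tendsto_0)
    fix n
    define c where "c = (2::complex) ^ n"
    have "Y.hn (hyers_lim (c *\<^sub>C x) - H (c *\<^sub>C x))
        \<le> Y.hn (f (c *\<^sub>C x) - hyers_lim (c *\<^sub>C x)) + Y.hn (f (c *\<^sub>C x) - H (c *\<^sub>C x))"
      using Y.hn_triangle_diff[of "hyers_lim (c *\<^sub>C x)" "H (c *\<^sub>C x)" "f (c *\<^sub>C x)"]
        Y.hn_minus_commute[of "hyers_lim (c *\<^sub>C x)" "f (c *\<^sub>C x)"]
      by linarith
    also have "\<dots> \<le> K * \<phi> (c *\<^sub>C x) (c *\<^sub>C x) 0 + K * \<phi> (c *\<^sub>C x) (c *\<^sub>C x) 0"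
      using hn_f_minus_hyers_lim_le[of "c *\<^sub>C x"] bound by (intro add_mono) (simp_all add: K_def)
    also have "\<dots> \<le> K * ((2 * L) ^ n * \<phi> x x 0) + K * ((2 * L) ^ n * \<phi> x x 0)"
      using phi_scale_pow[of n x x 0] K by (intro add_mono mult_left_mono) (simp_all add: c_def)
    also have "\<dots> = (2 * L) ^ n * (2 * K * \<phi> x x 0)" by simp
    finally have "Y.hn ((1/2::complex) ^ n *\<^sub>C (hyers_lim (c *\<^sub>C x) - H (c *\<^sub>C x)))
        \<le> L ^ n * (2 * K * \<phi> x x 0)"
      by (rule hn_half_pow_scaleC_le)
    moreover have "(1/2::complex) ^ n *\<^sub>C (hyers_lim (c *\<^sub>C x) - H (c *\<^sub>C x)) = hyers_lim x - H x"
      by (simp add: c_def hyers_lim_scaleC H_scaleC scaleC_diff_right scaleC_scaleC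
          power_mult_distrib[symmetric] scaleC_one)
    ultimately show "Y.hn (hyers_lim x - H x) \<le> L ^ n * (2 * K * \<phi> x x 0)" by simp
  next
    show "(\<lambda>n. L ^ n * (2 * K * \<phi> x x 0)) \<longlonglongrightarrow> 0"
      using L_nonneg L_less_1 by (intro tendsto_mult_left_zero LIMSEQ_power_zero) simp
  qed
  thus "H x = hyers_lim x" by simp
qed

end

theorem theorem2p2:
  fixes actA :: "'a::cstar_algebra \<Rightarrow> 'x::complex_vec \<Rightarrow> 'x"
    and ipX :: "'x \<Rightarrow> 'x \<Rightarrow> 'a"
    and actB :: "'b::cstar_algebra \<Rightarrow> 'y::complex_vec \<Rightarrow> 'y"
    and ipY :: "'y \<Rightarrow> 'y \<Rightarrow> 'b"
    and f :: "'x \<Rightarrow> 'y"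
    and \<phi> :: "'x \<Rightarrow> 'x \<Rightarrow> 'x \<Rightarrow> real"
    and L :: real
  assumes "hilbert_module actA ipX"
    and "hilbert_module actB ipY"
    and "\<forall>x y z. \<phi> x y z \<ge> 0"
    and "\<forall>\<mu> x y. cmod \<mu> = 1 \<longrightarrow>
           hnorm ipY (f (\<mu> *\<^sub>C x + y) - \<mu> *\<^sub>C f x - f y) \<le> \<phi> x y 0"
    and "\<forall>x y z. hnorm ipY (f (actA (ipX x y) z) - actB (ipY (f x) (f y)) (f z)) \<le> \<phi> x y z"
    and "0 \<le> L" and "L < 1"
    and "\<forall>x y z. \<phi> x y z \<le> 2 * L * \<phi> ((1/2) *\<^sub>C x) ((1/2) *\<^sub>C y) ((1/2) *\<^sub>C z)"
  shows "\<exists>!H. hilbert_module_hom actA ipX actB ipY H \<and>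
           (\<forall>x. hnorm ipY (f x - H x) \<le> 1 / (2 - 2 * L) * \<phi> x x 0)"
proof -
  interpret approx_hilbert_hom actA ipX actB ipY f \<phi> L
    by (unfold_locales; fact assms)
  show ?thesis
    using hilbert_module_hom_hyers_lim hn_f_minus_hyers_lim_le hyers_lim_unique by blast
qed

end
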